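(* Let $(G,G^+)$ be a simple partially ordered abelian group of rank one, and let $\mathfrak{n}$ be a generalized integer associated to $G$ (i.e. $G\cong\mathbb{Z}_{\mathfrak{n}}$ as abelian groups). Then for every infinite generalized integer $\mathfrak{m}$ coprime with $\mathfrak{n}$ there exist a simple Riesz group of rank one $(\widetilde G(\mathfrak{m}),\widetilde G^+(\mathfrak{m}))$ and a positive morphism $\tau\colon G\to\widetilde G(\mathfrak{m})$ such that (1) $\widetilde G(\mathfrak{m})$ is isomorphic, as an abelian group, to $\mathbb{Z}_{\mathfrak{n}\cdot\mathfrak{m}}$, and (2) $\tau$ is an order-embedding.
   Context: Partially ordered abelian group $(G,G^+)$: abelian group with a submonoid $G^+\ni 0$ with $G^+\cap(-G^+)=\{0\}$, $x\le_G y$ iff $y-x\in G^+$. It is simple if $G\ne 0$ and every nonzero $u\in G^+$ is an order-unit (for all $x$ there is $n$ with $-nu\le x\le nu$). It is a Riesz group if whenever $x,y_1,y_2\in G^+$ with $x\le y_1+y_2$ there are $x_1,x_2\in G^+$ with $x=x_1+x_2$, $x_j\le y_j$. Rank one: isomorphic to a nonzero subgroup of $\mathbb{Q}$. A positive morphism is a homomorphism $f$ with $f(G^+)\subseteq H^+$; an order-embedding is an injective positive morphism with $f(G^+)=f(G)\cap H^+$. A generalized integer is a map $\mathfrak{n}\colon\mathbb{P}\to\{0,1,2,\dots,\infty\}$ ($\mathbb{P}$ the primes), written $\prod_p p^{\mathfrak{n}(p)}$; it is finite if it never takes the value $\infty$ and is nonzero at only finitely many primes, and infinite otherwise. Products add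 exponents; $\mathfrak{n}\mid\mathfrak{m}$ if $\mathfrak{m}=\mathfrak{n}\mathfrak{n}'$ for some $\mathfrak{n}'$; $\mathfrak{n},\mathfrak{m}$ are coprime if for every prime $p$, $0\in\{\mathfrak{n}(p),\mathfrak{m}(p)\}$. $\mathbb{Z}_{\mathfrak{n}}=\{a/b\in\mathbb{Q}: a\in\mathbb{Z}, b\mid\mathfrak{n}\}$; every subgroup of $\mathbb{Q}$ containing $1$ is $\mathbb{Z}_{\mathfrak{n}}$ for a unique $\mathfrak{n}$. *)

theory Defs
  imports Main "HOL-Library.Extended_Nat" "HOL-Computational_Algebra.Primes"
begin

definition subgrp :: "'a::ab_group_add set \<Rightarrow> bool" where
  "subgrp G \<longleftrightarrow> 0 \<in> G \<and> (\<forall>x\<in>G. \<forall>y\<in>G. x + y \<in> G) \<and> (\<forall>x\<in>G. - x \<in> G)"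

definition po_group :: "'a::ab_group_add set \<Rightarrow> 'a set \<Rightarrow> bool" where
  "po_group G P \<longleftrightarrow> subgrp G \<and> P \<subseteq> G \<and> 0 \<in> P \<and> (\<forall>x\<in>P. \<forall>y\<in>P. x + y \<in> P)
     \<and> P \<inter> uminus ` P = {0}"

definition po_le :: "'a::ab_group_add set \<Rightarrow> 'a \<Rightarrow> 'a \<Rightarrow> bool" where
  "po_le P x y \<longleftrightarrow> y - x \<in> P"

primrec nmul :: "nat \<Rightarrow> 'a::ab_group_add \<Rightarrow> 'a" where
  "nmul 0 u = 0"
| "nmul (Suc n) u = u + nmul n u"

definition order_unit :: "'a::ab_group_add set \<Rightarrow> 'a set \<Rightarrow> 'a \<Rightarrow> bool" where
  "order_unit G P u \<longleftrightarrow> u \<in> P \<and>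
     (\<forall>x\<in>G. \<exists>n::nat. po_le P (- nmul n u) x \<and> po_le P x (nmul n u))"

definition simple_pog :: "'a::ab_group_add set \<Rightarrow> 'a set \<Rightarrow> bool" where
  "simple_pog G P \<longleftrightarrow> G \<noteq> {0} \<and> (\<forall>u\<in>P. u \<noteq> 0 \<longrightarrow> order_unit G P u)"

definition riesz :: "'a::ab_group_add set \<Rightarrow> 'a set \<Rightarrow> bool" where
  "riesz G P \<longleftrightarrow> (\<forall>x\<in>P. \<forall>y1\<in>P. \<forall>y2\<in>P. po_le P x (y1 + y2) \<longrightarrow>
     (\<exists>x1\<in>P. \<exists>x2\<in>P. x = x1 + x2 \<and> po_le P x1 y1 \<and> po_le P x2 y2))"

definition additive_on :: "'a::ab_group_add set \<Rightarrow> ('a \<Rightarrow> 'b::ab_group_add) \<Rightarrow> bool" where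
  "additive_on G f \<longleftrightarrow> (\<forall>x\<in>G. \<forall>y\<in>G. f (x + y) = f x + f y)"

definition ab_iso :: "'a::ab_group_add set \<Rightarrow> 'b::ab_group_add set \<Rightarrow> ('a \<Rightarrow> 'b) \<Rightarrow> bool" where
  "ab_iso G H f \<longleftrightarrow> additive_on G f \<and> bij_betw f G H"

definition rank_one :: "'a::ab_group_add set \<Rightarrow> bool" where
  "rank_one G \<longleftrightarrow> (\<exists>(K::rat set) f. subgrp K \<and> K \<noteq> {0} \<and> ab_iso G K f)"

definition pos_morph :: "'a::ab_group_add set \<Rightarrow> 'a set \<Rightarrow> 'b::ab_group_add set \<Rightarrow> 'b set
    \<Rightarrow> ('a \<Rightarrow> 'b) \<Rightarrow> bool" where
  "pos_morph G P H Q f \<longleftrightarrow> additive_on G f \<and> f ` G \<subseteq> H \<and> f ` P \<subseteq> Q"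

definition order_embedding :: "'a::ab_group_add set \<Rightarrow> 'a set \<Rightarrow> 'b::ab_group_add set \<Rightarrow> 'b set
    \<Rightarrow> ('a \<Rightarrow> 'b) \<Rightarrow> bool" where
  "order_embedding G P H Q f \<longleftrightarrow> pos_morph G P H Q f \<and> inj_on f G \<and> f ` P = f ` G \<inter> Q"

text \<open>A generalized integer is a map from primes to {0,1,...,\<infinity>}; we use nat \<Rightarrow> enat
  and only ever look at its values at primes.\<close>
type_synonym gen_int = "nat \<Rightarrow> enat"

definition gi_mult :: "gen_int \<Rightarrow> gen_int \<Rightarrow> gen_int" where
  "gi_mult a b = (\<lambda>p. a p + b p)"

definition gi_finite :: "gen_int \<Rightarrow> bool" where
  "gi_finite a \<longleftrightarrow> (\<forall>p. prime p \<longrightarrow> a p \<noteq> \<infinity>) \<and> finite {p. prime p \<and> a p \<noteq> 0}"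

definition gi_dvd :: "gen_int \<Rightarrow> gen_int \<Rightarrow> bool" where
  "gi_dvd a b \<longleftrightarrow> (\<exists>c. \<forall>p. prime p \<longrightarrow> b p = gi_mult a c p)"

definition gi_coprime :: "gen_int \<Rightarrow> gen_int \<Rightarrow> bool" where
  "gi_coprime a b \<longleftrightarrow> (\<forall>p. prime p \<longrightarrow> a p = 0 \<or> b p = 0)"

definition gi_of_nat :: "nat \<Rightarrow> gen_int" where
  "gi_of_nat b = (\<lambda>p. enat (multiplicity p b))"

definition Z_gi :: "gen_int \<Rightarrow> rat set" where
  "Z_gi a = {of_int k / of_nat b | k b. b > 0 \<and> gi_dvd (gi_of_nat b) a}"

end

theory Submission
  imports Defs "HOL-Library.Countable"
begin

text \<open>Transport the order of \<open>G\<close> along an isomorphism \<open>G \<rightarrow> \<int>\<^sub>n\<close>, normalised to be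
  nonnegative on \<open>G\<^sup>+\<close> (the image of \<open>G\<^sup>+\<close> cannot have elements \<open>u > 0 > v\<close>, since then
  \<open>b u = -a v\<close> for some positive integers \<open>a, b\<close> would lie in \<open>G\<^sup>+ \<inter> -G\<^sup>+ = {0}\<close>).
  This gives a cone \<open>S \<subseteq> \<int>\<^sub>n\<close> whose nonzero elements are order units.
  The Riesz cone on \<open>\<int>\<^sub>n\<^sub>m\<close> is the union of an increasing sequence of cones
  \<open>T\<^sub>i \<subseteq> (1/D\<^sub>i)\<int>\<^sub>n\<close> with \<open>T\<^sub>i \<inter> \<int>\<^sub>n = S\<close>, where the \<open>D\<^sub>i\<close> are finite divisors of \<open>m\<close>.
  To interpolate \<open>x \<le> y\<^sub>1 + y\<^sub>2\<close> in \<open>T\<^sub>i\<close>, pass to \<open>(1/(D\<^sub>i q\<^sup>k))\<int>\<^sub>n\<close> for a prime \<open>q\<close> of \<open>m\<close>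
  with \<open>q\<^sup>k\<close> large (available since \<open>m\<close> is infinite) and adjoin \<open>w = r/q\<^sup>k\<close>, \<open>x - w\<close>,
  \<open>y\<^sub>1 - w\<close>, \<open>y\<^sub>2 - x + w\<close>, where \<open>r \<in> T\<^sub>i\<close> is large and not divisible by \<open>q\<close> in
  \<open>(1/D\<^sub>i)\<int>\<^sub>n\<close> (\<open>q\<close> does not divide \<open>n\<close>). Non-divisibility forces the new cone to meet
  \<open>(1/D\<^sub>i)\<int>\<^sub>n\<close> only in \<open>T\<^sub>i\<close>. Interleaving these steps over all triples with steps that
  only enlarge \<open>D\<^sub>i\<close> by primes of \<open>m\<close>, the union is a simple Riesz cone on all of \<open>\<int>\<^sub>n\<^sub>m\<close>.\<close>

section \<open>Generalized integers\<close>

lemma gi_dvd_of_nat_iff: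
  "gi_dvd (gi_of_nat b) a \<longleftrightarrow> (\<forall>p. prime p \<longrightarrow> enat (multiplicity p b) \<le> a p)"
proof
  assume "gi_dvd (gi_of_nat b) a"
  then show "\<forall>p. prime p \<longrightarrow> enat (multiplicity p b) \<le> a p"
    by (auto simp: gi_dvd_def gi_mult_def gi_of_nat_def)
next
  assume le: "\<forall>p. prime p \<longrightarrow> enat (multiplicity p b) \<le> a p"
  have "a p = gi_mult (gi_of_nat b) (\<lambda>p. a p - enat (multiplicity p b)) p" if "prime p" for p
    using le that unfolding gi_mult_def gi_of_nat_def by (cases "a p") auto
  then show "gi_dvd (gi_of_nat b) a" unfolding gi_dvd_def by blast
qed

lemma gi_dvd_of_nat_1: "gi_dvd (gi_of_nat 1) a"
  unfolding gi_dvd_of_nat_iff by (simp add: enat_0)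

lemma gi_dvd_of_nat_dvd:
  assumes "c dvd b" "b > 0" "gi_dvd (gi_of_nat b) a"
  shows "gi_dvd (gi_of_nat c) a"
  unfolding gi_dvd_of_nat_iff
proof (intro allI impI)
  fix p :: nat assume "prime p"
  have "multiplicity p c \<le> multiplicity p b" using assms(1,2) by (simp add: dvd_imp_multiplicity_le)
  then show "enat (multiplicity p c) \<le> a p"
    using assms(3) \<open>prime p\<close> unfolding gi_dvd_of_nat_iff by (meson enat_ord_simps(1) order_trans)
qed

lemma gi_dvd_of_nat_lcm:
  assumes "b > 0" "c > 0" "gi_dvd (gi_of_nat b) a" "gi_dvd (gi_of_nat c) a"
  shows "gi_dvd (gi_of_nat (lcm b c)) a"
  unfolding gi_dvd_of_nat_iff
proof (intro allI impI)
  fix p :: nat assume "prime p"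
  then have "multiplicity p (lcm b c) = max (multiplicity p b) (multiplicity p c)"
    using assms by (intro multiplicity_lcm) auto
  then show "enat (multiplicity p (lcm b c)) \<le> a p"
    using assms \<open>prime p\<close> unfolding gi_dvd_of_nat_iff by (auto simp: max_def)
qed

lemma gi_dvd_of_nat_mult_prime_power_iff:
  assumes p: "prime p" and D: "D > 0" "gi_dvd (gi_of_nat D) m"
  shows "gi_dvd (gi_of_nat (D * p ^ e)) m \<longleftrightarrow> enat (multiplicity p D + e) \<le> m p"
proof -
  have mult: "multiplicity p' (D * p ^ e) = multiplicity p' D + (if p' = p then e else 0)"
    if "prime p'" for p'
    using that p D multiplicity_distinct_prime_power[OF that p]
    by (subst prime_elem_multiplicity_mult_distrib) (auto simp: prime_gt_0_nat)
  show ?thesis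
    unfolding gi_dvd_of_nat_iff using D(2) p by (auto simp: mult gi_dvd_of_nat_iff)
qed

lemma nat_split_prime_power:
  fixes b :: nat
  assumes "b > 1"
  obtains p e c where "prime p" "e = multiplicity p b" "b = p ^ e * c" "\<not> p dvd c" "0 < c" "c < b"
proof -
  obtain p where p: "prime p" "p dvd b" using assms prime_factor_nat by (metis less_irrefl)
  have bp: "b \<noteq> 0" "\<not> is_unit p" using assms p(1) by (auto simp: not_prime_unit)
  then obtain c where c: "b = p ^ multiplicity p b * c" "\<not> p dvd c" by (rule multiplicity_decompose')
  have "1 \<le> multiplicity p b" using multiplicity_gt_zero_iff[OF bp] p(2) by simp
  then have "1 < p ^ multiplicity p b"
    using prime_gt_1_nat[OF p(1)] by (metis one_less_power less_le_trans zero_less_one)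
  moreover have "c > 0" using c(1) assms by (auto intro: gr0I)
  ultimately have "c < b" by (subst c(1)) simp
  then show ?thesis using that[OF p(1) refl] c \<open>c > 0\<close> by blast
qed

lemma gi_dvd_of_nat_gi_mult_split:
  assumes cop: "gi_coprime n m"
  shows "b > 0 \<Longrightarrow> gi_dvd (gi_of_nat b) (gi_mult n m) \<Longrightarrow>
    \<exists>b1 b2. b = b1 * b2 \<and> b1 > 0 \<and> b2 > 0 \<and> gi_dvd (gi_of_nat b1) n \<and> gi_dvd (gi_of_nat b2) m"
proof (induction b rule: less_induct)
  case (less b)
  show ?case
  proof (cases "b = 1")
    case True then show ?thesis using gi_dvd_of_nat_1 by auto
  next
    case False
    then have "b > 1" using less.prems(1) by simp
    then obtain p e c where p: "prime p" and e: "e = multiplicity p b" and c: "b = p ^ e * c" "\<not> p dvd c"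
      and c_pos: "c > 0" and c_less: "c < b"
      by (rule nat_split_prime_power)
    obtain c1 c2 where c12: "c = c1 * c2" "c1 > 0" "c2 > 0" "gi_dvd (gi_of_nat c1) n" "gi_dvd (gi_of_nat c2) m"
      using less.IH[OF c_less c_pos] gi_dvd_of_nat_dvd[of c b] c(1) less.prems by auto
    have "\<not> p dvd c1" "\<not> p dvd c2" using c(2) unfolding c12(1) by (meson dvd_mult2 dvd_mult)+
    then have mult0: "multiplicity p c1 = 0" "multiplicity p c2 = 0" by (simp_all add: not_dvd_imp_multiplicity_0)
    have "enat e \<le> n p + m p"
      using less.prems(2) p unfolding gi_dvd_of_nat_iff gi_mult_def e by blast
    moreover have "n p = 0 \<or> m p = 0" using cop p unfolding gi_coprime_def by blast
    ultimately consider "enat e \<le> n p" | "enat e \<le> m p" by auto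
    then show ?thesis
    proof cases
      case 1
      then have "gi_dvd (gi_of_nat (c1 * p ^ e)) n"
        using gi_dvd_of_nat_mult_prime_power_iff[OF p c12(2,4)] mult0 by simp
      moreover have "b = (c1 * p ^ e) * c2" "c1 * p ^ e > 0" using c(1) c12(1,2) p by (simp_all add: prime_gt_0_nat)
      ultimately show ?thesis using c12(3,5) by blast
    next
      case 2
      then have "gi_dvd (gi_of_nat (c2 * p ^ e)) m"
        using gi_dvd_of_nat_mult_prime_power_iff[OF p c12(3,5)] mult0 by simp
      moreover have "b = c1 * (c2 * p ^ e)" "c2 * p ^ e > 0" using c(1) c12(1,3) p by (simp_all add: prime_gt_0_nat)
      ultimately show ?thesis using c12(2,4) by blast
    qed
  qed
qed

lemma exists_large_prime_power_dvd:
  assumes m: "\<not> gi_finite m" and D: "D > 0" "gi_dvd (gi_of_nat D) m"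
  shows "\<exists>q k. prime q \<and> m q \<noteq> 0 \<and> M \<le> q ^ k \<and> gi_dvd (gi_of_nat (D * q ^ k)) m"
proof (cases "\<exists>p. prime p \<and> m p = \<infinity>")
  case True
  then obtain p where p: "prime p" "m p = \<infinity>" by blast
  have "M < 2 ^ M" by (rule less_exp)
  also have "\<dots> \<le> p ^ M" using prime_ge_2_nat[OF p(1)] by (simp add: power_mono)
  finally show ?thesis
    using p gi_dvd_of_nat_mult_prime_power_iff[OF p(1) D] by (intro exI[of _ p] exI[of _ M]) auto
next
  case False
  then have "infinite {p. prime p \<and> m p \<noteq> 0}" using m unfolding gi_finite_def by auto
  then obtain p where p: "p > max M D" "prime p" "m p \<noteq> 0"
    unfolding infinite_nat_iff_unbounded by blast
  then have "multiplicity p D = 0" using D(1) by (metis dvd_imp_le max.strict_boundedE not_dvd_imp_multiplicity_0 not_le)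
  moreover have "enat 1 \<le> m p" using p(3) by (cases "m p") (auto simp: zero_enat_def one_enat_def)
  ultimately show ?thesis
    using p gi_dvd_of_nat_mult_prime_power_iff[OF p(2) D, of 1] by (intro exI[of _ p] exI[of _ 1]) auto
qed

lemma in_Z_gi: "b > 0 \<Longrightarrow> gi_dvd (gi_of_nat b) a \<Longrightarrow> of_int k / of_nat b \<in> Z_gi a"
  unfolding Z_gi_def by blast

lemma Z_gi_common_denom:
  assumes "x \<in> Z_gi a" "y \<in> Z_gi a"
  obtains b k l where "b > 0" "gi_dvd (gi_of_nat b) a" "x = of_int k / of_nat b" "y = of_int l / of_nat b"
proof -
  obtain k b where b: "b > 0" "gi_dvd (gi_of_nat b) a" "x = of_int k / of_nat b"
    using assms(1) unfolding Z_gi_def by blast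
  obtain l c where c: "c > 0" "gi_dvd (gi_of_nat c) a" "y = of_int l / of_nat c"
    using assms(2) unfolding Z_gi_def by blast
  define B where "B = lcm b c"
  have B: "B > 0" "gi_dvd (gi_of_nat B) a" using b c gi_dvd_of_nat_lcm lcm_pos_nat unfolding B_def by auto
  obtain b' c' where b': "B = b * b'" and c': "B = c * c'" unfolding B_def by (metis dvd_lcm1 dvd_lcm2 dvdE)
  have "x = of_int (k * b') / of_nat B" using b(3) b' B(1) by (simp add: field_simps)
  moreover have "y = of_int (l * c') / of_nat B" using c(3) c' B(1) by (simp add: field_simps)
  ultimately show ?thesis using that B by blast
qed

lemma subgrp_Z_gi: "subgrp (Z_gi a)"
  unfolding subgrp_def
proof (intro conjI ballI)
  show "0 \<in> Z_gi a" using in_Z_gi[of 1 a 0] gi_dvd_of_nat_1 by simp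
next
  fix x y assume "x \<in> Z_gi a" "y \<in> Z_gi a"
  then obtain b k l where "b > 0" "gi_dvd (gi_of_nat b) a" "x = of_int k / of_nat b" "y = of_int l / of_nat b"
    by (rule Z_gi_common_denom)
  then show "x + y \<in> Z_gi a" using in_Z_gi[of b a "k + l"] by (simp add: add_divide_distrib)
next
  fix x assume "x \<in> Z_gi a"
  then obtain k b where "b > 0" "gi_dvd (gi_of_nat b) a" "x = of_int k / of_nat b"
    unfolding Z_gi_def by blast
  then show "- x \<in> Z_gi a" using in_Z_gi[of b a "- k"] by simp
qed

lemma one_in_Z_gi: "1 \<in> Z_gi a"
  using in_Z_gi[of 1 a 1] gi_dvd_of_nat_1 by simp

lemma inverse_prime_notin_Z_gi:
  assumes q: "prime q" "a q = 0"
  shows "1 / of_nat q \<notin> Z_gi a"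
proof
  assume "1 / of_nat q \<in> Z_gi a"
  then obtain k b where b: "b > 0" "gi_dvd (gi_of_nat b) a" "1 / of_nat q = (of_int k / of_nat b :: rat)"
    unfolding Z_gi_def by blast
  have q0: "q > 0" using q(1) by (simp add: prime_gt_0_nat)
  from b(3) have "of_nat b = (of_int k * of_nat q :: rat)" using b(1) q0 by (simp add: field_simps)
  then have "int b = k * int q" by (metis of_int_eq_iff of_int_mult of_int_of_nat_eq)
  then have "q ^ 1 dvd b" by (metis dvd_triv_right int_dvd_int_iff power_one_right)
  then have "enat 1 \<le> multiplicity q b" using multiplicity_geI[of b q 1] b(1) q(1) prime_gt_1_nat[OF q(1)]
    by (simp add: one_enat_def)
  moreover have "enat (multiplicity q b) \<le> 0" using b(2) q unfolding gi_dvd_of_nat_iff by metis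
  ultimately show False by (simp add: one_enat_def zero_enat_def)
qed

section \<open>Subgroups of the rationals\<close>

lemma subgrp_add: "subgrp A \<Longrightarrow> x \<in> A \<Longrightarrow> y \<in> A \<Longrightarrow> x + y \<in> A"
  unfolding subgrp_def by blast

lemma subgrp_minus: "subgrp A \<Longrightarrow> x \<in> A \<Longrightarrow> - x \<in> A"
  unfolding subgrp_def by blast

lemma subgrp_diff: "subgrp A \<Longrightarrow> x \<in> A \<Longrightarrow> y \<in> A \<Longrightarrow> x - y \<in> A"
  using subgrp_add subgrp_minus by (metis diff_conv_add_uminus)

lemma subgrp_nat_mult: "subgrp (A :: rat set) \<Longrightarrow> x \<in> A \<Longrightarrow> of_nat j * x \<in> A"
proof (induction j)
  case (Suc j)
  have "of_nat (Suc j) * x = x + of_nat j * x" by (simp add: algebra_simps)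
  then show ?case using Suc subgrp_add by metis
qed (simp add: subgrp_def)

lemma subgrp_int_mult: "subgrp (A :: rat set) \<Longrightarrow> x \<in> A \<Longrightarrow> of_int j * x \<in> A"
proof (cases "j \<ge> 0")
  case False
  then have "of_int j * x = - (of_nat (nat (- j)) * x)" by simp
  then show "subgrp A \<Longrightarrow> x \<in> A \<Longrightarrow> of_int j * x \<in> A" by (metis subgrp_minus subgrp_nat_mult)
qed (metis of_int_of_nat_eq nat_0_le subgrp_nat_mult)

definition over :: "rat set \<Rightarrow> nat \<Rightarrow> rat set" where
  "over K D = (\<lambda>a. a / of_nat D) ` K"

lemma over_1 [simp]: "over K 1 = K"
  unfolding over_def by simp

lemma over_over: "over (over K D) Q = over K (D * Q)"
  unfolding over_def image_image by simp

lemma in_over_iff: "Q > 0 \<Longrightarrow> h \<in> over K Q \<longleftrightarrow> of_nat Q * h \<in> K"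
  unfolding over_def by (force simp: image_iff)

lemma subgrp_over: "subgrp K \<Longrightarrow> subgrp (over K D)"
  unfolding subgrp_def over_def
proof (intro conjI ballI)
  assume K: "0 \<in> K \<and> (\<forall>x\<in>K. \<forall>y\<in>K. x + y \<in> K) \<and> (\<forall>x\<in>K. - x \<in> K)"
  then show "0 \<in> (\<lambda>a. a / of_nat D) ` K" by force
  fix x y assume "x \<in> (\<lambda>a. a / of_nat D) ` K" "y \<in> (\<lambda>a. a / of_nat D) ` K"
  then obtain a b where "a \<in> K" "b \<in> K" "x = a / of_nat D" "y = b / of_nat D" by blast
  then show "x + y \<in> (\<lambda>a. a / of_nat D) ` K" using K by (metis add_divide_distrib image_eqI)
next
  assume K: "0 \<in> K \<and> (\<forall>x\<in>K. \<forall>y\<in>K. x + y \<in> K) \<and> (\<forall>x\<in>K. - x \<in> K)"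
  fix x assume "x \<in> (\<lambda>a. a / of_nat D) ` K"
  then obtain a where "a \<in> K" "x = a / of_nat D" by blast
  then show "- x \<in> (\<lambda>a. a / of_nat D) ` K" using K by (metis minus_divide_left image_eqI)
qed

lemma subset_over: "subgrp K \<Longrightarrow> Q > 0 \<Longrightarrow> K \<subseteq> over K Q"
  using subgrp_nat_mult by (auto simp: in_over_iff)

lemma over_mono_dvd:
  assumes "subgrp K" "D dvd D'" "D' > 0"
  shows "over K D \<subseteq> over K D'"
proof -
  obtain Q where Q: "D' = D * Q" using assms(2) by blast
  then have "Q > 0" using assms(3) by simp
  then show ?thesis using subset_over[OF subgrp_over[OF assms(1)]] by (simp add: Q over_over)
qed

lemma over_Z_gi_subset:
  assumes D: "D > 0" "gi_dvd (gi_of_nat D) m"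
  shows "over (Z_gi n) D \<subseteq> Z_gi (gi_mult n m)"
proof
  fix x assume "x \<in> over (Z_gi n) D"
  then obtain y where "y \<in> Z_gi n" and x: "x = y / of_nat D" unfolding over_def by blast
  then obtain k b where b: "b > 0" "gi_dvd (gi_of_nat b) n" "y = of_int k / of_nat b"
    unfolding Z_gi_def by blast
  have "gi_dvd (gi_of_nat (b * D)) (gi_mult n m)"
    unfolding gi_dvd_of_nat_iff
  proof (intro allI impI)
    fix p :: nat assume p: "prime p"
    have "multiplicity p (b * D) = multiplicity p b + multiplicity p D"
      using p b(1) D(1) by (intro prime_elem_multiplicity_mult_distrib) auto
    then show "enat (multiplicity p (b * D)) \<le> gi_mult n m p"
      using b(2) D(2) p unfolding gi_dvd_of_nat_iff gi_mult_def by (metis add_mono plus_enat_simps(1))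
  qed
  moreover have "x = of_int k / of_nat (b * D)" using x b(3) by simp
  ultimately show "x \<in> Z_gi (gi_mult n m)" using b(1) D(1) in_Z_gi[of "b * D"] by simp
qed

lemma Z_gi_mult_in_over:
  assumes cop: "gi_coprime n m" and h: "h \<in> Z_gi (gi_mult n m)"
  shows "\<exists>b > 0. gi_dvd (gi_of_nat b) m \<and> h \<in> over (Z_gi n) b"
proof -
  obtain k b where b: "b > 0" "gi_dvd (gi_of_nat b) (gi_mult n m)" "h = of_int k / of_nat b"
    using h unfolding Z_gi_def by blast
  then obtain b1 b2 where b12: "b = b1 * b2" "b1 > 0" "b2 > 0" "gi_dvd (gi_of_nat b1) n" "gi_dvd (gi_of_nat b2) m"
    using gi_dvd_of_nat_gi_mult_split[OF cop] by blast
  have "h = (of_int k / of_nat b1) / of_nat b2" using b(3) b12(1) by simp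
  moreover have "of_int k / of_nat b1 \<in> Z_gi n" using in_Z_gi[OF b12(2,4)] .
  ultimately show ?thesis using b12(3,5) unfolding over_def by blast
qed

lemma Z_gi_subset_Z_gi_mult: "Z_gi n \<subseteq> Z_gi (gi_mult n m)"
  using over_Z_gi_subset[of 1 m n] gi_dvd_of_nat_1[of m] unfolding over_1 by simp

definition divisible_in :: "rat set \<Rightarrow> nat \<Rightarrow> rat \<Rightarrow> bool" where
  "divisible_in A q x \<longleftrightarrow> (\<exists>t\<in>A. x = of_nat q * t)"

lemma divisible_in_int_mult:
  "subgrp A \<Longrightarrow> divisible_in A q x \<Longrightarrow> divisible_in A q (of_int j * x)"
  unfolding divisible_in_def by (metis mult.left_commute subgrp_int_mult)

lemma divisible_in_diff:
  "subgrp A \<Longrightarrow> divisible_in A q x \<Longrightarrow> divisible_in A q y \<Longrightarrow> divisible_in A q (x - y)"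
  unfolding divisible_in_def by (metis right_diff_distrib subgrp_diff)

lemma divisible_in_cancel_coprime:
  assumes A: "subgrp A" and x: "x \<in> A" and q: "prime q" and j: "\<not> int q dvd j"
    and jx: "divisible_in A q (of_int j * x)"
  shows "divisible_in A q x"
proof -
  have "coprime (int q) j" using j q by (simp add: prime_imp_coprime_int prime_nat_iff_prime)
  then have "coprime j (int q)" by (simp add: coprime_commute)
  then obtain u v where uv: "u * j + v * int q = 1" using bezout_int[of j "int q"] by auto
  have "x = of_int u * (of_int j * x) - of_nat q * (of_int (- v) * x)"
    using arg_cong[OF uv, of "\<lambda>c. of_int c * x"] by (simp add: algebra_simps)
  moreover have "divisible_in A q (of_nat q * (of_int (- v) * x))"
    unfolding divisible_in_def using subgrp_int_mult[OF A x] by blast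
  ultimately show ?thesis
    using divisible_in_diff[OF A divisible_in_int_mult[OF A jx, of u]] by metis
qed

lemma prime_power_dvd_if_mult_eq:
  assumes A: "subgrp A" and q: "prime q" and r: "r \<in> A" "\<not> divisible_in A q r"
  shows "t \<in> A \<Longrightarrow> of_int j * r = of_nat (q ^ k) * t \<Longrightarrow> int (q ^ k) dvd j"
proof (induction k arbitrary: j t)
  case (Suc k)
  have "divisible_in A q (of_int j * r)"
    using Suc.prems subgrp_nat_mult[OF A, of t "q ^ k"] unfolding divisible_in_def by auto
  then have "int q dvd j" using divisible_in_cancel_coprime[OF A r(1) q] r(2) by blast
  then obtain j' where j': "j = int q * j'" by blast
  then have "of_int j' * r = of_nat (q ^ k) * t" using Suc.prems(2) q by (simp add: prime_gt_0_nat)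
  then show ?case using Suc.IH[OF Suc.prems(1)] j' by simp
qed simp

lemma prime_power_dvd_if_mult_fraction_in:
  assumes A: "subgrp A" and q: "prime q" and r: "r \<in> A" "\<not> divisible_in A q r"
    and j: "of_nat j * (r / of_nat (q ^ k)) \<in> A"
  shows "q ^ k dvd j"
proof -
  have "of_int (int j) * r = of_nat (q ^ k) * (of_nat j * (r / of_nat (q ^ k)))"
    using q by (simp add: prime_gt_0_nat)
  then have "int (q ^ k) dvd int j" by (rule prime_power_dvd_if_mult_eq[OF A q r j])
  then show ?thesis by presburger
qed

lemma inverse_not_divisible_in_over:
  assumes q: "prime q" "n q = 0" and D: "D > 0"
  shows "\<not> divisible_in (over (Z_gi n) D) q (1 / of_nat D)"
proof
  assume "divisible_in (over (Z_gi n) D) q (1 / of_nat D)"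
  then obtain a where "a \<in> Z_gi n" "1 / of_nat D = of_nat q * (a / of_nat D)"
    unfolding divisible_in_def over_def by blast
  moreover from this have "a = 1 / of_nat q" using D q by (simp add: field_simps prime_gt_0_nat)
  ultimately show False using inverse_prime_notin_Z_gi[of q n, OF q] by simp
qed

lemma rat_subgrp_common_generator:
  fixes L :: "rat set"
  assumes L: "subgrp L" "x \<in> L" "y \<in> L" and y: "y \<noteq> 0"
  shows "\<exists>g\<in>L. g > 0 \<and> (\<exists>a. x = of_int a * g) \<and> (\<exists>b. y = of_int b * g)"
proof -
  obtain k1 d1 where 1: "quotient_of x = (k1, d1)" by fastforce
  obtain k2 d2 where 2: "quotient_of y = (k2, d2)" by fastforce
  define N where "N = d1 * d2"
  have N: "N > 0" unfolding N_def using 1 2 quotient_of_denom_pos by fastforce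
  have x: "x = of_int (k1 * d2) / of_int N" and y': "y = of_int (k2 * d1) / of_int N"
    using 1 2 quotient_of_div quotient_of_denom_pos unfolding N_def by fastforce+
  define G where "G = gcd (k1 * d2) (k2 * d1)"
  have G: "G > 0" using y y' unfolding G_def by (auto simp: le_less)
  obtain u v where uv: "u * (k1 * d2) + v * (k2 * d1) = G"
    using bezout_int unfolding G_def by blast
  define g where "g = of_int G / (of_int N :: rat)"
  have "g = of_int u * x + of_int v * y"
    unfolding g_def x y' uv[symmetric] by (simp add: add_divide_distrib)
  then have "g \<in> L" using L by (simp add: subgrp_add subgrp_int_mult)
  moreover have "z = of_int (k div G) * g" if "z = of_int k / of_int N" "G dvd k" for z k
    using that G N unfolding g_def by auto
  then have "x = of_int (k1 * d2 div G) * g" "y = of_int (k2 * d1 div G) * g"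
    using x y' unfolding G_def by auto
  moreover have "g > 0" unfolding g_def using G N by simp
  ultimately show ?thesis by blast
qed

lemma rat_subgrp_finite_common_generator:
  fixes L :: "rat set"
  assumes L: "subgrp L" and V: "finite V" "V \<subseteq> L" and e: "e \<in> V" "e \<noteq> 0"
  shows "\<exists>g\<in>L. g > 0 \<and> (\<forall>v\<in>V. \<exists>a. v = of_int a * g)"
proof -
  have "\<exists>g\<in>L. g > 0 \<and> (\<forall>v\<in>insert e W. \<exists>a. v = of_int a * g)" if "finite W" "W \<subseteq> L" for W
    using that
  proof (induction W rule: finite_induct)
    case empty
    have "\<bar>e\<bar> \<in> L" using L e V by (cases "e \<ge> 0") (auto simp: subgrp_minus)
    moreover have "e = of_int (if e > 0 then 1 else - 1) * \<bar>e\<bar>" by auto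
    ultimately show ?case using e(2) by (intro bexI[of _ "\<bar>e\<bar>"]) auto
  next
    case (insert w W)
    then obtain g where g: "g \<in> L" "g > 0" "\<forall>v\<in>insert e W. \<exists>a. v = of_int a * g" by auto
    obtain g' a b where g': "g' \<in> L" "g' > 0" "w = of_int a * g'" "g = of_int b * g'"
      using rat_subgrp_common_generator[OF L insert.prems(1)[THEN insert_subset[THEN iffD1], THEN conjunct1] g(1)] g(2)
      by auto
    have "\<exists>c. v = of_int c * g'" if "v \<in> insert e W" for v
      using g(3) that g'(4) by (metis mult.assoc of_int_mult)
    then show ?case using g' by auto
  qed
  from this[of "V - {e}"] show ?thesis using V e by (auto simp: insert_absorb)
qed

lemma over_prime_power_decomp:
  assumes L: "subgrp L" and q: "prime q" and r: "r \<in> L" "\<not> divisible_in L q r"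
    and h: "h \<in> over L (q ^ k)"
  shows "\<exists>c < q ^ k. \<exists>l\<in>L. h = l + of_nat c * (r / of_nat (q ^ k))"
proof -
  define Q where "Q = q ^ k"
  have Q: "Q > 0" unfolding Q_def using q by (simp add: prime_gt_0_nat)
  have "r \<noteq> 0" using r L unfolding divisible_in_def subgrp_def by force
  moreover have "of_nat Q * h \<in> L" using h Q unfolding Q_def by (simp add: in_over_iff)
  ultimately obtain g a b where g: "g \<in> L" "of_nat Q * h = of_int a * g" "r = of_int b * g"
    using rat_subgrp_common_generator[OF L(1) _ r(1)] by blast
  have "\<not> int q dvd b"
  proof
    assume "int q dvd b"
    then obtain b' where "b = int q * b'" by blast
    then have "r = of_nat q * (of_int b' * g)" using g(3) by simp
    then show False using r(2) subgrp_int_mult[OF L g(1)] unfolding divisible_in_def by blast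
  qed
  then have "coprime (int q) b" using q by (simp add: prime_imp_coprime_int prime_nat_iff_prime)
  then have "coprime b (int Q)" unfolding Q_def by (simp add: coprime_commute)
  then obtain u v where uv: "u * b + v * int Q = 1" using bezout_int[of b "int Q"] by auto
  define c where "c = (u * a) mod int Q"
  have c: "0 \<le> c" "c < int Q" using Q unfolding c_def by auto
  have "a - c * b = a * v * int Q + (u * a - c) * b"
    using arg_cong[OF uv, of "\<lambda>z. a * z"] by (simp add: algebra_simps)
  moreover have "int Q dvd u * a - c" unfolding c_def by (simp add: dvd_minus_mod)
  ultimately have "int Q dvd a - c * b" by simp
  then obtain t where t: "a - c * b = int Q * t" by blast
  have "h = of_int t * g + of_nat (nat c) * (r / of_nat Q)"
  proof -
    have "of_nat Q * h = of_nat Q * (of_int t * g) + of_int c * r"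
      using arg_cong[OF t, of "\<lambda>z. of_int z * g"] g(2,3) by (simp add: algebra_simps)
    then show ?thesis using Q c by (simp add: field_simps)
  qed
  moreover have "nat c < q ^ k" using c unfolding Q_def by linarith
  ultimately show ?thesis using subgrp_int_mult[OF L g(1)] unfolding Q_def by blast
qed

section \<open>Simple cones\<close>

definition simple_cone :: "rat set \<Rightarrow> rat set \<Rightarrow> bool" where
  "simple_cone L T \<longleftrightarrow> T \<subseteq> L \<and> 0 \<in> T \<and> (\<forall>a\<in>T. \<forall>b\<in>T. a + b \<in> T) \<and> (\<forall>t\<in>T. 0 \<le> t)
     \<and> (\<forall>u\<in>T. u \<noteq> 0 \<longrightarrow> (\<forall>h\<in>L. \<exists>N::nat. h + of_nat N * u \<in> T \<and> of_nat N * u - h \<in> T))"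

lemma cone_nat_mult:
  fixes T :: "rat set"
  assumes "0 \<in> T" "\<forall>a\<in>T. \<forall>b\<in>T. a + b \<in> T" "t \<in> T"
  shows "of_nat N * t \<in> T"
proof (induction N)
  case (Suc N)
  have "of_nat (Suc N) * t = t + of_nat N * t" by (simp add: algebra_simps)
  then show ?case using Suc assms by simp
qed (use assms in simp)

lemma simple_cone_eventually_int_mult:
  assumes T: "simple_cone L T" and L: "subgrp L" "g \<in> L"
    and x: "x \<in> T" "x \<noteq> 0" "x = of_int a * g" and a: "a > 0"
  shows "\<exists>M. \<forall>k \<ge> M. of_int k * g \<in> T"
proof -
  have T0: "0 \<in> T" and Tadd: "\<forall>a\<in>T. \<forall>b\<in>T. a + b \<in> T"
    using T unfolding simple_cone_def by blast+
  have "\<exists>N. of_nat c * g + of_nat N * x \<in> T" for c :: nat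
    using T x subgrp_nat_mult[OF L] unfolding simple_cone_def by blast
  then obtain N where N: "\<And>c. of_nat c * g + of_nat (N c) * x \<in> T" by metis
  define B where "B = (\<Sum>c<nat a. N c)"
  have "of_int k * g \<in> T" if k: "k \<ge> int B * a" for k
  proof -
    define c where "c = nat (k mod a)"
    define e where "e = nat (k div a)"
    have c: "c < nat a" and ke: "k = int e * a + int c"
      using a k unfolding c_def e_def by (auto simp: pos_imp_zdiv_nonneg_iff order_trans[OF _ k])
    have "N c \<le> B" using c unfolding B_def by (intro member_le_sum) auto
    moreover have "int B \<le> k div a" using k a by (metis nonzero_mult_div_cancel_right zdiv_mono1 less_irrefl)
    ultimately have "of_nat (e - N c) = (of_nat e - of_nat (N c) :: rat)" unfolding e_def by (simp add: of_nat_diff)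
    moreover have "(of_int k :: rat) = of_nat e * of_int a + of_nat c"
      using ke by (metis of_int_add of_int_mult of_int_of_nat_eq)
    ultimately have "of_int k * g = (of_nat c * g + of_nat (N c) * x) + of_nat (e - N c) * x"
      using x(3) by (simp add: algebra_simps)
    then show ?thesis using N cone_nat_mult[OF T0 Tadd x(1)] Tadd by metis
  qed
  then show ?thesis by blast
qed

definition has_interpolant :: "rat set \<Rightarrow> rat \<Rightarrow> rat \<Rightarrow> rat \<Rightarrow> bool" where
  "has_interpolant T x y1 y2 \<longleftrightarrow> (\<exists>x1\<in>T. x - x1 \<in> T \<and> y1 - x1 \<in> T \<and> y2 - (x - x1) \<in> T)"

lemma riesz_if_has_interpolants:
  assumes P0: "0 \<in> P"
    and interp: "\<And>x y1 y2. x \<in> P \<Longrightarrow> y1 \<in> P \<Longrightarrow> y2 \<in> P \<Longrightarrow> y1 + y2 - x \<in> P \<Longrightarrow>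
      x \<noteq> 0 \<Longrightarrow> y1 \<noteq> 0 \<Longrightarrow> y2 \<noteq> 0 \<Longrightarrow> y1 + y2 - x \<noteq> 0 \<Longrightarrow> has_interpolant P x y1 y2"
  shows "riesz G P"
  unfolding riesz_def po_le_def
proof (intro ballI impI)
  fix x y1 y2 assume xy: "x \<in> P" "y1 \<in> P" "y2 \<in> P" "y1 + y2 - x \<in> P"
  show "\<exists>x1\<in>P. \<exists>x2\<in>P. x = x1 + x2 \<and> y1 - x1 \<in> P \<and> y2 - x2 \<in> P"
  proof (cases "x = 0 \<or> y1 = 0 \<or> y2 = 0 \<or> y1 + y2 - x = 0")
    case True
    then show ?thesis
    proof (elim disjE)
      assume "x = 0" then show ?thesis using P0 xy by (intro bexI[of _ 0]) auto
    next
      assume "y1 = 0" then show ?thesis using P0 xy by (intro bexI[of _ 0] bexI[of _ x]) auto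
    next
      assume "y2 = 0" then show ?thesis using P0 xy by (intro bexI[of _ x] bexI[of _ 0]) auto
    next
      assume "y1 + y2 - x = 0"
      then show ?thesis using P0 xy by (intro bexI[of _ y1] bexI[of _ y2]) auto
    qed
  next
    case False
    then obtain x1 where "x1 \<in> P" "x - x1 \<in> P" "y1 - x1 \<in> P" "y2 - (x - x1) \<in> P"
      using interp[OF xy] unfolding has_interpolant_def by blast
    then show ?thesis by (intro bexI[of _ x1] bexI[of _ "x - x1"]) auto
  qed
qed

section \<open>Adjoining an interpolant\<close>

definition adjoin4 :: "rat set \<Rightarrow> rat \<Rightarrow> rat \<Rightarrow> rat \<Rightarrow> rat \<Rightarrow> rat set" where
  "adjoin4 T w1 w2 w3 w4 = {t + of_nat n1 * w1 + of_nat n2 * w2 + of_nat n3 * w3 + of_nat n4 * w4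
      | t n1 n2 n3 n4. t \<in> T}"

lemma adjoin4_memI:
  "t \<in> T \<Longrightarrow> t + of_nat n1 * w1 + of_nat n2 * w2 + of_nat n3 * w3 + of_nat n4 * w4 \<in> adjoin4 T w1 w2 w3 w4"
  unfolding adjoin4_def by blast

lemma adjoin4_add:
  fixes T :: "rat set"
  assumes Tadd: "\<forall>a\<in>T. \<forall>b\<in>T. a + b \<in> T"
    and "a \<in> adjoin4 T w1 w2 w3 w4" "b \<in> adjoin4 T w1 w2 w3 w4"
  shows "a + b \<in> adjoin4 T w1 w2 w3 w4"
proof -
  obtain t n1 n2 n3 n4 t' n1' n2' n3' n4' where t: "t \<in> T" "t' \<in> T"
    and "a = t + of_nat n1 * w1 + of_nat n2 * w2 + of_nat n3 * w3 + of_nat n4 * w4"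
    and "b = t' + of_nat n1' * w1 + of_nat n2' * w2 + of_nat n3' * w3 + of_nat n4' * w4"
    using assms(2,3) unfolding adjoin4_def by blast
  then have "a + b = (t + t') + of_nat (n1 + n1') * w1 + of_nat (n2 + n2') * w2
      + of_nat (n3 + n3') * w3 + of_nat (n4 + n4') * w4"
    by (simp add: algebra_simps)
  then show ?thesis using adjoin4_memI Tadd t by metis
qed

lemma adjoin4_normal_form:
  fixes T :: "rat set"
  assumes Tadd: "\<forall>a\<in>T. \<forall>b\<in>T. a + b \<in> T"
    and w: "w1 + w2 \<in> T" "w1 + w3 \<in> T" "w4 + w2 \<in> T" "w4 + w3 \<in> T"
  shows "t \<in> T \<Longrightarrow> \<exists>t'\<in>T. \<exists>a b.
    t + of_nat n1 * w1 + of_nat n2 * w2 + of_nat n3 * w3 + of_nat n4 * w4 = t' + of_nat a * w1 + of_nat b * w4 \<or>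
    t + of_nat n1 * w1 + of_nat n2 * w2 + of_nat n3 * w3 + of_nat n4 * w4 = t' + of_nat a * w2 + of_nat b * w3"
proof (induction "n1 + n2 + n3 + n4" arbitrary: t n1 n2 n3 n4 rule: less_induct)
  case less
  consider "n2 = 0" "n3 = 0" | "n1 = 0" "n4 = 0" | "n1 > 0" "n2 > 0" | "n1 > 0" "n3 > 0"
    | "n4 > 0" "n2 > 0" | "n4 > 0" "n3 > 0" by linarith
  then show ?case
  proof cases
    case 1 then show ?thesis using less.prems by force
  next
    case 2 then show ?thesis using less.prems by force
  next
    case 3
    then obtain a b where "n1 = Suc a" "n2 = Suc b" by (metis gr0_conv_Suc)
    then show ?thesis using less.hyps[of a b n3 n4 "t + (w1 + w2)"] less.prems w Tadd
      by (simp add: algebra_simps)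
  next
    case 4
    then obtain a b where "n1 = Suc a" "n3 = Suc b" by (metis gr0_conv_Suc)
    then show ?thesis using less.hyps[of a n2 b n4 "t + (w1 + w3)"] less.prems w Tadd
      by (simp add: algebra_simps)
  next
    case 5
    then obtain a b where "n4 = Suc a" "n2 = Suc b" by (metis gr0_conv_Suc)
    then show ?thesis using less.hyps[of n1 b n3 a "t + (w4 + w2)"] less.prems w Tadd
      by (simp add: algebra_simps)
  next
    case 6
    then obtain a b where "n4 = Suc a" "n3 = Suc b" by (metis gr0_conv_Suc)
    then show ?thesis using less.hyps[of n1 n2 b a "t + (w4 + w3)"] less.prems w Tadd
      by (simp add: algebra_simps)
  qed
qed

lemma two_generator_element_in_cone:
  fixes T L :: "rat set"
  assumes Tadd: "\<forall>a\<in>T. \<forall>b\<in>T. a + b \<in> T" and TL: "T \<subseteq> L" and L: "subgrp L" "d \<in> L"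
    and Q: "Q > 0" and step: "\<And>j. j \<le> Q \<Longrightarrow> of_nat Q * w + of_nat j * d \<in> T"
    and dvd: "\<And>j. of_nat j * w \<in> L \<Longrightarrow> Q dvd j"
  shows "t \<in> T \<Longrightarrow> t + of_nat a * w + of_nat b * (w + d) \<in> L \<Longrightarrow> t + of_nat a * w + of_nat b * (w + d) \<in> T"
proof (induction "a + b" arbitrary: t a b rule: less_induct)
  case less
  define v where "v = t + of_nat a * w + of_nat b * (w + d)"
  have vL: "v \<in> L" using less.prems(2) unfolding v_def .
  have "of_nat (a + b) * w = v - t - of_nat b * d" unfolding v_def by (simp add: algebra_simps)
  moreover have "v - t - of_nat b * d \<in> L"
    using less.prems TL L unfolding v_def[symmetric] by (meson subgrp_diff subgrp_nat_mult subsetD)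
  ultimately have "Q dvd a + b" using dvd by simp
  show ?case
  proof (cases "a + b = 0")
    case True then show ?thesis using less.prems by simp
  next
    case False
    with \<open>Q dvd a + b\<close> have "Q \<le> a + b" by (simp add: dvd_imp_le)
    show ?thesis
    proof (cases "Q \<le> a")
      case True
      have t': "t + (of_nat Q * w + of_nat 0 * d) \<in> T" using less.prems(1) step[of 0] Tadd by simp
      have v: "v = (t + (of_nat Q * w + of_nat 0 * d)) + of_nat (a - Q) * w + of_nat b * (w + d)"
        using True unfolding v_def by (simp add: of_nat_diff algebra_simps)
      have "v \<in> T"
        unfolding v by (rule less.hyps) (use True Q t' vL[unfolded v] in auto)
      then show ?thesis unfolding v_def .
    next
      case False
      define j where "j = Q - a"
      have t': "t + (of_nat Q * w + of_nat j * d) \<in> T" using less.prems(1) step[of j] Tadd j_def by simp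
      have v: "v = (t + (of_nat Q * w + of_nat j * d)) + of_nat 0 * w + of_nat (b - j) * (w + d)"
        using False \<open>Q \<le> a + b\<close> unfolding v_def j_def by (simp add: of_nat_diff algebra_simps)
      have "v \<in> T"
        unfolding v by (rule less.hyps) (use False \<open>Q \<le> a + b\<close> t' vL[unfolded v] j_def in auto)
      then show ?thesis unfolding v_def .
    qed
  qed
qed

lemma adjoin4_order_unit:
  fixes T L L' :: "rat set"
  assumes T: "simple_cone L T" and L: "subgrp L" and Q: "Q > 0"
    and w: "of_nat Q * w1 \<in> T" "of_nat Q * w2 \<in> T" "of_nat Q * w3 \<in> T" "of_nat Q * w4 \<in> T"
    and decomp: "\<And>h. h \<in> L' \<Longrightarrow> \<exists>c < Q. \<exists>l\<in>L. h = l + of_nat c * w1"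
    and u: "u \<in> adjoin4 T w1 w2 w3 w4" "u \<noteq> 0" and h: "h \<in> L'"
  shows "\<exists>N::nat. h + of_nat N * u \<in> adjoin4 T w1 w2 w3 w4 \<and> of_nat N * u - h \<in> adjoin4 T w1 w2 w3 w4"
proof -
  have T0: "0 \<in> T" and Tadd: "\<forall>a\<in>T. \<forall>b\<in>T. a + b \<in> T" and TL: "T \<subseteq> L"
    and Tsimple: "\<And>u h. u \<in> T \<Longrightarrow> u \<noteq> 0 \<Longrightarrow> h \<in> L \<Longrightarrow> \<exists>N::nat. h + of_nat N * u \<in> T \<and> of_nat N * u - h \<in> T"
    using T unfolding simple_cone_def by blast+
  note mult = cone_nat_mult[OF T0 Tadd]
  obtain t n1 n2 n3 n4 where t: "t \<in> T"
    and ut: "u = t + of_nat n1 * w1 + of_nat n2 * w2 + of_nat n3 * w3 + of_nat n4 * w4"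
    using u(1) unfolding adjoin4_def by blast
  define u' where "u' = of_nat Q * u"
  have "u' = of_nat Q * t + of_nat n1 * (of_nat Q * w1) + of_nat n2 * (of_nat Q * w2)
      + of_nat n3 * (of_nat Q * w3) + of_nat n4 * (of_nat Q * w4)"
    unfolding u'_def ut by (simp add: algebra_simps)
  then have u'T: "u' \<in> T" using mult[OF t] mult[OF w(1)] mult[OF w(2)] mult[OF w(3)] mult[OF w(4)] Tadd
    by simp
  have u'0: "u' \<noteq> 0" unfolding u'_def using u(2) Q by simp
  obtain c l where c: "c < Q" "l \<in> L" "h = l + of_nat c * w1" using decomp[OF h] by blast
  obtain N1 where N1: "l + of_nat N1 * u' \<in> T" using Tsimple[OF u'T u'0 c(2)] by blast
  have "l + of_nat Q * w1 \<in> L" using c(2) w(1) TL L by (auto intro: subgrp_add)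
  then obtain N2 where N2: "of_nat N2 * u' - (l + of_nat Q * w1) \<in> T" using Tsimple[OF u'T u'0] by blast
  have Nu: "of_nat (Q * (N1 + N2)) * u = of_nat N1 * u' + of_nat N2 * u'"
    unfolding u'_def by (simp add: algebra_simps)
  have "h + of_nat (Q * (N1 + N2)) * u
      = ((l + of_nat N1 * u') + of_nat N2 * u') + of_nat c * w1 + of_nat 0 * w2 + of_nat 0 * w3 + of_nat 0 * w4"
    unfolding Nu c(3) by (simp add: algebra_simps)
  moreover have "of_nat (Q * (N1 + N2)) * u - h
      = ((of_nat N2 * u' - (l + of_nat Q * w1)) + of_nat N1 * u') + of_nat (Q - c) * w1
        + of_nat 0 * w2 + of_nat 0 * w3 + of_nat 0 * w4"
    unfolding Nu c(3) using c(1) by (simp add: of_nat_diff algebra_simps)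
  ultimately show ?thesis
    using N1 N2 mult[OF u'T] Tadd adjoin4_memI by (metis (no_types, lifting))
qed

lemma simple_cone_adjoin4:
  fixes L T :: "rat set"
  assumes T: "simple_cone L T" and L: "subgrp L" and Q: "Q > 0"
    and w: "of_nat Q * w1 \<in> T" "of_nat Q * w2 \<in> T" "of_nat Q * w3 \<in> T" "of_nat Q * w4 \<in> T"
    and decomp: "\<And>h. h \<in> over L Q \<Longrightarrow> \<exists>c < Q. \<exists>l\<in>L. h = l + of_nat c * w1"
  shows "simple_cone (over L Q) (adjoin4 T w1 w2 w3 w4)"
  unfolding simple_cone_def
proof (intro conjI ballI impI)
  have T0: "0 \<in> T" and Tadd: "\<forall>a\<in>T. \<forall>b\<in>T. a + b \<in> T" and Tnn: "\<forall>t\<in>T. 0 \<le> t" and TL: "T \<subseteq> L"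
    using T unfolding simple_cone_def by blast+
  have "T \<subseteq> over L Q" using TL subset_over[OF L Q] by blast
  moreover have "w1 \<in> over L Q" "w2 \<in> over L Q" "w3 \<in> over L Q" "w4 \<in> over L Q"
    using w TL Q by (auto simp: in_over_iff)
  ultimately show "adjoin4 T w1 w2 w3 w4 \<subseteq> over L Q"
    using subgrp_over[OF L] unfolding adjoin4_def by (force intro!: subgrp_add subgrp_nat_mult)
  show "0 \<in> adjoin4 T w1 w2 w3 w4" using adjoin4_memI[OF T0, of 0 _ 0 _ 0 _ 0] by simp
  show "a + b \<in> adjoin4 T w1 w2 w3 w4" if "a \<in> adjoin4 T w1 w2 w3 w4" "b \<in> adjoin4 T w1 w2 w3 w4" for a b
    using adjoin4_add[OF Tadd] that by blast
  have "0 \<le> w1" "0 \<le> w2" "0 \<le> w3" "0 \<le> w4"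
    using w Tnn Q by (metis of_nat_0_less_iff zero_le_mult_iff not_less)+
  then show "0 \<le> a" if "a \<in> adjoin4 T w1 w2 w3 w4" for a
    using that Tnn unfolding adjoin4_def by auto
  show "\<exists>N::nat. h + of_nat N * u \<in> adjoin4 T w1 w2 w3 w4 \<and> of_nat N * u - h \<in> adjoin4 T w1 w2 w3 w4"
    if "u \<in> adjoin4 T w1 w2 w3 w4" "u \<noteq> 0" "h \<in> over L Q" for u h
    using adjoin4_order_unit[OF T L Q w decomp that] by blast
qed

text \<open>Modulo \<open>L\<close>, an element of the enlarged cone is a natural multiple of \<open>w\<close>, and since
  \<open>r\<close> is not divisible by \<open>q\<close> in \<open>L\<close> that multiple is one of \<open>Q\<close>; the hypotheses \<open>lower\<close> and
  \<open>upper\<close> say precisely that such blocks of \<open>Q\<close> generators can be absorbed into \<open>T\<close>.\<close>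

lemma adjoin_interpolant_inter:
  fixes L T :: "rat set"
  assumes Tadd: "\<forall>a\<in>T. \<forall>b\<in>T. a + b \<in> T" and TL: "T \<subseteq> L" and L: "subgrp L"
    and q: "prime q" and Q: "Q = q ^ k"
    and xy: "x \<in> T" "y1 \<in> T" "y2 \<in> T" "y1 + y2 - x \<in> T"
    and r: "r \<in> L" "\<not> divisible_in L q r"
    and lower: "\<And>j. j \<le> Q \<Longrightarrow> r + of_nat j * (y2 - x) \<in> T"
    and upper: "\<And>j. j \<le> Q \<Longrightarrow> of_nat Q * x - r + of_nat j * (y1 - x) \<in> T"
  defines "w \<equiv> r / of_nat Q"
  shows "adjoin4 T w (x - w) (y1 - w) (y2 - (x - w)) \<inter> L \<subseteq> T"
proof
  fix v assume v: "v \<in> adjoin4 T w (x - w) (y1 - w) (y2 - (x - w)) \<inter> L"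
  have Q0: "Q > 0" using q Q by (simp add: prime_gt_0_nat)
  have Qw: "of_nat Q * w = r" unfolding w_def using Q0 by simp
  have dvd: "Q dvd j" if "of_nat j * w \<in> L" for j
    using prime_power_dvd_if_mult_fraction_in[OF L q r] that unfolding w_def Q .
  have dvd': "Q dvd j" if "of_nat j * (x - w) \<in> L" for j
    using dvd subgrp_diff[OF L subgrp_nat_mult[OF L, of x j] that] TL xy(1)
    by (simp add: algebra_simps subset_iff)
  have dL: "y2 - x \<in> L" "y1 - x \<in> L" using xy TL L by (auto intro: subgrp_diff)
  obtain t n1 n2 n3 n4 where t: "t \<in> T"
    and vt: "v = t + of_nat n1 * w + of_nat n2 * (x - w) + of_nat n3 * (y1 - w) + of_nat n4 * (y2 - (x - w))"
    using v unfolding adjoin4_def by blast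
  have "w + (x - w) \<in> T" "w + (y1 - w) \<in> T" "y2 - (x - w) + (x - w) \<in> T" "y2 - (x - w) + (y1 - w) \<in> T"
    using xy by (simp_all add: algebra_simps)
  from adjoin4_normal_form[OF Tadd this t] obtain t' a b where t': "t' \<in> T" and
    "v = t' + of_nat a * w + of_nat b * (y2 - (x - w)) \<or> v = t' + of_nat a * (x - w) + of_nat b * (y1 - w)"
    unfolding vt by blast
  moreover have "y2 - (x - w) = w + (y2 - x)" "y1 - w = (x - w) + (y1 - x)" by simp_all
  ultimately consider
      "v = t' + of_nat a * w + of_nat b * (w + (y2 - x))"
    | "v = t' + of_nat a * (x - w) + of_nat b * ((x - w) + (y1 - x))"
    by argo
  then show "v \<in> T"
  proof cases
    case 1
    have "of_nat Q * w + of_nat j * (y2 - x) \<in> T" if "j \<le> Q" for j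
      using lower[OF that] Qw by simp
    then show ?thesis using two_generator_element_in_cone[OF Tadd TL L dL(1) Q0 _ dvd t'] v 1 by blast
  next
    case 2
    have "of_nat Q * (x - w) + of_nat j * (y1 - x) \<in> T" if "j \<le> Q" for j
      using upper[OF that] Qw by (simp add: right_diff_distrib)
    then show ?thesis using two_generator_element_in_cone[OF Tadd TL L dL(2) Q0 _ dvd' t'] v 2 by blast
  qed
qed

lemma adjoin_interpolant:
  fixes L T :: "rat set"
  assumes L: "subgrp L" and T: "simple_cone L T" and q: "prime q" and Q: "Q = q ^ k"
    and xy: "x \<in> T" "y1 \<in> T" "y2 \<in> T" "y1 + y2 - x \<in> T"
    and r: "r \<in> L" "\<not> divisible_in L q r"
    and lower: "\<And>j. j \<le> Q \<Longrightarrow> r + of_nat j * (y2 - x) \<in> T"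
    and upper: "\<And>j. j \<le> Q \<Longrightarrow> of_nat Q * x - r + of_nat j * (y1 - x) \<in> T"
  defines "w \<equiv> r / of_nat Q"
  defines "A \<equiv> adjoin4 T w (x - w) (y1 - w) (y2 - (x - w))"
  shows "simple_cone (over L Q) A \<and> A \<inter> L = T \<and> w \<in> A \<and> x - w \<in> A \<and> y1 - w \<in> A \<and> y2 - (x - w) \<in> A"
proof -
  have T0: "0 \<in> T" and Tadd: "\<forall>a\<in>T. \<forall>b\<in>T. a + b \<in> T" and TL: "T \<subseteq> L"
    using T unfolding simple_cone_def by blast+
  have Q0: "Q > 0" using q Q by (simp add: prime_gt_0_nat)
  have Qw: "of_nat Q * w = r" unfolding w_def using Q0 by simp
  have "of_nat Q * w \<in> T" "of_nat Q * (x - w) \<in> T" "of_nat Q * (y1 - w) \<in> T"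
    "of_nat Q * (y2 - (x - w)) \<in> T"
    using lower[of 0] upper[of 0] upper[of Q] lower[of Q]
    by (simp_all add: Qw[symmetric] algebra_simps)
  then have "simple_cone (over L Q) A"
    using simple_cone_adjoin4[OF T L Q0] over_prime_power_decomp[OF L q r] unfolding A_def w_def Q by blast
  moreover have "A \<inter> L \<subseteq> T"
    using adjoin_interpolant_inter[OF Tadd TL L q Q xy r lower upper] unfolding A_def w_def .
  moreover have "T \<subseteq> A" using adjoin4_memI[of _ T 0 _ 0 _ 0 _ 0] unfolding A_def by force
  moreover have "w \<in> A" "x - w \<in> A" "y1 - w \<in> A" "y2 - (x - w) \<in> A"
    unfolding A_def
    using adjoin4_memI[OF T0, of 1 w 0 "x - w" 0 "y1 - w" 0 "y2 - (x - w)"]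
      adjoin4_memI[OF T0, of 0 w 1 "x - w" 0 "y1 - w" 0 "y2 - (x - w)"]
      adjoin4_memI[OF T0, of 0 w 0 "x - w" 1 "y1 - w" 0 "y2 - (x - w)"]
      adjoin4_memI[OF T0, of 0 w 0 "x - w" 0 "y1 - w" 1 "y2 - (x - w)"]
    by simp_all
  ultimately show ?thesis using TL by blast
qed

lemma linear_ge_if_endpoints_ge:
  fixes c d M :: int
  assumes "j \<le> Q" "M \<le> c" "M \<le> c + int Q * d"
  shows "M \<le> c + int j * d"
proof (cases "d \<ge> 0")
  case False
  then have "int Q * d \<le> int j * d" using assms(1) by (intro mult_right_mono_neg) auto
  then show ?thesis using assms by linarith
qed (use assms in \<open>simp add: add_increasing2\<close>)

lemma exists_nondivisible_in_window:
  fixes a b1 b2 M :: int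
  assumes q: "prime q" and pos: "0 < a" "0 < b1" "0 < b2" "0 < b1 + b2 - a"
    and M: "0 \<le> M" "2 * M + 2 \<le> int Q"
  shows "\<exists>k. \<not> int q dvd k \<and> (\<forall>j\<le>Q. M \<le> k + int j * (b2 - a))
    \<and> (\<forall>j\<le>Q. M \<le> int Q * a - k + int j * (b1 - a))"
proof -
  define lo where "lo = M + int Q * max 0 (a - b2)"
  obtain k where k: "\<not> int q dvd k" "lo \<le> k" "k \<le> lo + 1"
  proof (cases "int q dvd lo")
    case True
    then have "\<not> int q dvd lo + 1" using q prime_gt_1_nat[OF q] by (simp add: dvd_add_right_iff)
    then show ?thesis using that[of "lo + 1"] by simp
  qed (use that in auto)
  define P where "P = int Q * max 0 (a - b2)"
  have "int Q * 1 \<le> int Q * (a - max 0 (a - b2))" "int Q * 1 \<le> int Q * (b1 - max 0 (a - b2))"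
    "int Q * (a - b2) \<le> int Q * max 0 (a - b2)"
    using pos by (intro mult_left_mono; simp)+
  then have P: "0 \<le> P" "int Q \<le> int Q * a - P" "int Q \<le> int Q * b1 - P" "int Q * a - int Q * b2 \<le> P"
    unfolding P_def by (simp_all add: right_diff_distrib)
  have "int Q * (b2 - a) = int Q * b2 - int Q * a" "int Q * (b1 - a) = int Q * b1 - int Q * a"
    by (simp_all add: right_diff_distrib)
  then have "M \<le> k" "M \<le> k + int Q * (b2 - a)" "M \<le> int Q * a - k"
    "M \<le> int Q * a - k + int Q * (b1 - a)"
    using k M P unfolding lo_def P_def[symmetric] by linarith+
  then show ?thesis using k(1) linear_ge_if_endpoints_ge by blast
qed

section \<open>Stages of the construction\<close>

definition stage :: "gen_int \<Rightarrow> gen_int \<Rightarrow> rat set \<Rightarrow> nat \<Rightarrow> rat set \<Rightarrow> bool" where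
  "stage n m S D T \<longleftrightarrow> D > 0 \<and> gi_dvd (gi_of_nat D) m \<and> simple_cone (over (Z_gi n) D) T \<and> T \<inter> Z_gi n = S"

lemma stage_adjoin_interpolant:
  assumes st: "stage n m S D T" and q: "prime q" and dvd: "gi_dvd (gi_of_nat (D * q ^ k)) m"
    and xy: "x \<in> T" "y1 \<in> T" "y2 \<in> T" "y1 + y2 - x \<in> T"
    and r: "r \<in> over (Z_gi n) D" "\<not> divisible_in (over (Z_gi n) D) q r"
    and lower: "\<And>j. j \<le> q ^ k \<Longrightarrow> r + of_nat j * (y2 - x) \<in> T"
    and upper: "\<And>j. j \<le> q ^ k \<Longrightarrow> of_nat (q ^ k) * x - r + of_nat j * (y1 - x) \<in> T"
  shows "\<exists>T'. stage n m S (D * q ^ k) T' \<and> T \<subseteq> T' \<and> has_interpolant T' x y1 y2"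
proof -
  define L where "L = over (Z_gi n) D"
  have D: "D > 0" and T: "simple_cone L T" and S: "T \<inter> Z_gi n = S"
    using st unfolding stage_def L_def by blast+
  have L: "subgrp L" unfolding L_def by (intro subgrp_over subgrp_Z_gi)
  define A where "A = adjoin4 T (r / of_nat (q ^ k)) (x - r / of_nat (q ^ k)) (y1 - r / of_nat (q ^ k))
      (y2 - (x - r / of_nat (q ^ k)))"
  have A: "simple_cone (over L (q ^ k)) A" "A \<inter> L = T"
    and x1: "has_interpolant A x y1 y2"
    using adjoin_interpolant[OF L T q refl xy r[folded L_def] lower upper]
    unfolding A_def has_interpolant_def by blast+
  have "Z_gi n \<subseteq> L" unfolding L_def using subset_over[OF subgrp_Z_gi D] .
  then have "A \<inter> Z_gi n = S" using A(2) S by blast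
  moreover have "D * q ^ k > 0" using D q by (simp add: prime_gt_0_nat)
  ultimately have "stage n m S (D * q ^ k) A"
    using A(1) dvd unfolding stage_def L_def over_over by blast
  then show ?thesis using A(2) x1 by blast
qed

lemma simple_cone_interpolation_numerators:
  fixes L T :: "rat set"
  assumes T: "simple_cone L T" and L: "subgrp L" and g: "g \<in> L" "g > 0"
    and xy: "x \<in> T" "y1 \<in> T" "y2 \<in> T" "y1 + y2 - x \<in> T"
    and nz: "x \<noteq> 0" "y1 \<noteq> 0" "y2 \<noteq> 0" "y1 + y2 - x \<noteq> 0"
    and ab: "x = of_int a * g" "y1 = of_int b1 * g" "y2 = of_int b2 * g"
  obtains B where "\<And>q Q. prime q \<Longrightarrow> B \<le> Q \<Longrightarrow> \<exists>k. \<not> int q dvd k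
    \<and> (\<forall>j\<le>Q. of_int k * g + of_nat j * (y2 - x) \<in> T)
    \<and> (\<forall>j\<le>Q. of_nat Q * x - of_int k * g + of_nat j * (y1 - x) \<in> T)"
proof -
  have "0 < x" "0 < y1" "0 < y2" "0 < y1 + y2 - x" using xy nz T unfolding simple_cone_def by force+
  then have pos: "0 < a" "0 < b1" "0 < b2" "0 < b1 + b2 - a"
    using g(2) unfolding ab by (simp_all add: zero_less_mult_iff flip: distrib_right left_diff_distrib)
  obtain M where M: "\<And>k. k \<ge> M \<Longrightarrow> of_int k * g \<in> T"
    using simple_cone_eventually_int_mult[OF T L g(1) xy(1) nz(1) ab(1) pos(1)] by blast
  define M' where "M' = max M 0"
  have "\<exists>k. \<not> int q dvd k \<and> (\<forall>j\<le>Q. of_int k * g + of_nat j * (y2 - x) \<in> T)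
    \<and> (\<forall>j\<le>Q. of_nat Q * x - of_int k * g + of_nat j * (y1 - x) \<in> T)"
    if q: "prime q" and Q: "nat (2 * M' + 2) \<le> Q" for q Q
  proof -
    have "0 \<le> M'" "2 * M' + 2 \<le> int Q" using Q unfolding M'_def by linarith+
    then obtain k where k: "\<not> int q dvd k" "\<forall>j\<le>Q. M' \<le> k + int j * (b2 - a)"
      "\<forall>j\<le>Q. M' \<le> int Q * a - k + int j * (b1 - a)"
      using exists_nondivisible_in_window[OF q pos] by blast
    have "of_int k * g + of_nat j * (y2 - x) \<in> T" if "j \<le> Q" for j
    proof -
      have "M \<le> k + int j * (b2 - a)" using k(2) that unfolding M'_def by simp
      then have "of_int (k + int j * (b2 - a)) * g \<in> T" by (rule M)
      moreover have "of_int (k + int j * (b2 - a)) * g = of_int k * g + of_nat j * (y2 - x)"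
        unfolding ab by (simp add: algebra_simps)
      ultimately show ?thesis by metis
    qed
    moreover have "of_nat Q * x - of_int k * g + of_nat j * (y1 - x) \<in> T" if "j \<le> Q" for j
    proof -
      have "M \<le> int Q * a - k + int j * (b1 - a)" using k(3) that unfolding M'_def by simp
      then have "of_int (int Q * a - k + int j * (b1 - a)) * g \<in> T" by (rule M)
      moreover have "of_int (int Q * a - k + int j * (b1 - a)) * g = of_nat Q * x - of_int k * g + of_nat j * (y1 - x)"
        unfolding ab by (simp add: algebra_simps)
      ultimately show ?thesis by metis
    qed
    ultimately show ?thesis using k(1) by blast
  qed
  then show ?thesis using that by blast
qed

lemma stage_interpolate:
  assumes st: "stage n m S D T" and cop: "gi_coprime n m" and m: "\<not> gi_finite m"
    and xy: "x \<in> T" "y1 \<in> T" "y2 \<in> T" "y1 + y2 - x \<in> T"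
    and nz: "x \<noteq> 0" "y1 \<noteq> 0" "y2 \<noteq> 0" "y1 + y2 - x \<noteq> 0"
  shows "\<exists>D' T'. stage n m S D' T' \<and> T \<subseteq> T' \<and> D dvd D'
    \<and> has_interpolant T' x y1 y2"
proof -
  define L where "L = over (Z_gi n) D"
  have L: "subgrp L" unfolding L_def by (intro subgrp_over subgrp_Z_gi)
  have D: "D > 0" "gi_dvd (gi_of_nat D) m" and T: "simple_cone L T"
    using st unfolding stage_def L_def by blast+
  define e where "e = 1 / (of_nat D :: rat)"
  have e: "e \<in> L" "e \<noteq> 0" unfolding e_def L_def over_def using one_in_Z_gi D by auto
  obtain g where g: "g \<in> L" "g > 0" and "\<forall>v\<in>{x, y1, y2, e}. \<exists>a. v = of_int a * g"
    using rat_subgrp_finite_common_generator[OF L, of "{x, y1, y2, e}" e] xy T e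
    unfolding simple_cone_def by auto
  then obtain a b1 b2 c where ab: "x = of_int a * g" "y1 = of_int b1 * g" "y2 = of_int b2 * g"
    and c: "e = of_int c * g" by auto
  obtain B where B: "\<And>q Q. prime q \<Longrightarrow> B \<le> Q \<Longrightarrow> \<exists>k. \<not> int q dvd k
    \<and> (\<forall>j\<le>Q. of_int k * g + of_nat j * (y2 - x) \<in> T)
    \<and> (\<forall>j\<le>Q. of_nat Q * x - of_int k * g + of_nat j * (y1 - x) \<in> T)"
    using simple_cone_interpolation_numerators[OF T L g xy nz ab] by blast
  obtain q k where q: "prime q" "m q \<noteq> 0" "B \<le> q ^ k" and dvd: "gi_dvd (gi_of_nat (D * q ^ k)) m"
    using exists_large_prime_power_dvd[OF m D] by blast
  obtain k0 where k0: "\<not> int q dvd k0" "\<forall>j\<le>q ^ k. of_int k0 * g + of_nat j * (y2 - x) \<in> T"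
    "\<forall>j\<le>q ^ k. of_nat (q ^ k) * x - of_int k0 * g + of_nat j * (y1 - x) \<in> T"
    using B[OF q(1,3)] by blast
  have "\<not> divisible_in L q g"
  proof
    assume "divisible_in L q g"
    then have "divisible_in L q e" unfolding c by (rule divisible_in_int_mult[OF L])
    moreover have "n q = 0" using cop q(1,2) unfolding gi_coprime_def by blast
    ultimately show False
      using inverse_not_divisible_in_over[of q n, OF q(1) _ D(1)] unfolding L_def e_def by blast
  qed
  then have "of_int k0 * g \<in> L" "\<not> divisible_in L q (of_int k0 * g)"
    using subgrp_int_mult[OF L g(1)] divisible_in_cancel_coprime[OF L g(1) q(1) k0(1)] by auto
  then have "\<exists>T'. stage n m S (D * q ^ k) T' \<and> T \<subseteq> T'
      \<and> has_interpolant T' x y1 y2"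
    using k0 by (intro stage_adjoin_interpolant[OF st q(1) dvd xy]) (auto simp: L_def)
  then show ?thesis by (metis dvd_triv_left)
qed

lemma simple_cone_nondivisible_pair:
  fixes L T :: "rat set"
  assumes T: "simple_cone L T" and L: "subgrp L" and p: "prime p" and u: "u \<in> T" "u \<noteq> 0"
    and e: "e \<in> L" "\<not> divisible_in L p e"
  obtains r s where "r \<in> T" "\<not> divisible_in L p r" "s \<in> T" "of_nat p * s - r \<in> T"
proof -
  have T0: "0 \<in> T" and Tadd: "\<forall>a\<in>T. \<forall>b\<in>T. a + b \<in> T" and TL: "T \<subseteq> L"
    and Tsimple: "\<And>h. h \<in> L \<Longrightarrow> \<exists>N::nat. h + of_nat N * u \<in> T \<and> of_nat N * u - h \<in> T"
    using T u unfolding simple_cone_def by blast+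
  note mult = cone_nat_mult[OF T0 Tadd]
  have p1: "of_nat (p - 1) = (of_nat p - 1 :: rat)" using prime_ge_1_nat[OF p] by (simp add: of_nat_diff)
  obtain N0 where N0: "e + of_nat N0 * u \<in> T" using Tsimple[OF e(1)] by blast
  define r where "r = e + of_nat p * (of_nat N0 * u)"
  have "r = (e + of_nat N0 * u) + of_nat (p - 1) * (of_nat N0 * u)" unfolding r_def p1 by (simp add: algebra_simps)
  then have rT: "r \<in> T" using N0 mult[OF mult[OF u(1)]] Tadd by simp
  have "\<not> divisible_in L p r"
  proof
    assume "divisible_in L p r"
    moreover have "divisible_in L p (of_nat p * (of_nat N0 * u))"
      unfolding divisible_in_def using subgrp_nat_mult[OF L] u(1) TL by blast
    ultimately have "divisible_in L p e" using divisible_in_diff[OF L] unfolding r_def by fastforce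
    then show False using e(2) by blast
  qed
  obtain N where N: "of_nat N * u - r \<in> T" using Tsimple rT TL by blast
  define s where "s = of_nat N * u"
  have sT: "s \<in> T" unfolding s_def using mult[OF u(1)] .
  have ps: "of_nat p * s - r = (s - r) + of_nat (p - 1) * s" unfolding p1 by (simp add: algebra_simps)
  have "(s - r) + of_nat (p - 1) * s \<in> T" using N mult[OF sT] Tadd unfolding s_def by blast
  then have "of_nat p * s - r \<in> T" by (simp only: ps)
  then show ?thesis using that rT \<open>\<not> divisible_in L p r\<close> sT by blast
qed

text \<open>Refining the level by \<open>p\<close> is an interpolation step for the trivial configuration
  \<open>x = y\<^sub>1 = y\<^sub>2 = s\<close>.\<close>

lemma stage_refine:
  assumes st: "stage n m S D T" and cop: "gi_coprime n m" and p: "prime p"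
    and dvd: "gi_dvd (gi_of_nat (D * p)) m" and u: "u \<in> T" "u \<noteq> 0"
  shows "\<exists>T'. stage n m S (D * p) T' \<and> T \<subseteq> T'"
proof -
  define L where "L = over (Z_gi n) D"
  have L: "subgrp L" unfolding L_def by (intro subgrp_over subgrp_Z_gi)
  have D: "D > 0" "gi_dvd (gi_of_nat D) m" and T: "simple_cone L T"
    using st unfolding stage_def L_def by blast+
  have "enat (multiplicity p D + 1) \<le> m p" using dvd gi_dvd_of_nat_mult_prime_power_iff[OF p D, of 1] by simp
  then have "m p \<noteq> 0" by (auto simp: zero_enat_def)
  then have "n p = 0" using cop p unfolding gi_coprime_def by blast
  then have "1 / of_nat D \<in> L" "\<not> divisible_in L p (1 / of_nat D)"
    using one_in_Z_gi inverse_not_divisible_in_over[of p n, OF p _ D(1)] unfolding L_def over_def by auto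
  then obtain r s where rs: "r \<in> T" "\<not> divisible_in L p r" "s \<in> T" "of_nat (p ^ 1) * s - r \<in> T"
    using simple_cone_nondivisible_pair[OF T L p u] by auto
  have "gi_dvd (gi_of_nat (D * p ^ 1)) m" using dvd by simp
  then have "\<exists>T'. stage n m S (D * p ^ 1) T' \<and> T \<subseteq> T'
      \<and> has_interpolant T' s s s"
    using rs T unfolding simple_cone_def L_def
    by (intro stage_adjoin_interpolant[OF st p _ rs(3) rs(3) rs(3)]) auto
  then show ?thesis by auto
qed

lemma stage_extend:
  assumes st: "stage n m S D T" and cop: "gi_coprime n m" and m: "\<not> gi_finite m"
    and S: "\<exists>u\<in>S. u \<noteq> 0"
  shows "\<exists>D' T'. stage n m S D' T' \<and> T \<subseteq> T' \<and> D dvd D'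
    \<and> (prime p \<longrightarrow> gi_dvd (gi_of_nat (D * p)) m \<longrightarrow> D * p dvd D')
    \<and> (x \<in> T \<longrightarrow> y1 \<in> T \<longrightarrow> y2 \<in> T \<longrightarrow> y1 + y2 - x \<in> T \<longrightarrow>
        x \<noteq> 0 \<longrightarrow> y1 \<noteq> 0 \<longrightarrow> y2 \<noteq> 0 \<longrightarrow> y1 + y2 - x \<noteq> 0 \<longrightarrow> has_interpolant T' x y1 y2)"
proof -
  obtain D1 T1 where st1: "stage n m S D1 T1" "T \<subseteq> T1" "D dvd D1"
    "prime p \<longrightarrow> gi_dvd (gi_of_nat (D * p)) m \<longrightarrow> D * p dvd D1"
  proof (cases "prime p \<and> gi_dvd (gi_of_nat (D * p)) m")
    case True
    obtain u where "u \<in> T" "u \<noteq> 0" using S st unfolding stage_def by blast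
    then show ?thesis using stage_refine[OF st cop _ _ \<open>u \<in> T\<close>] True that by (meson dvd_triv_left dvd_refl)
  qed (use st that in auto)
  show ?thesis
  proof (cases "x \<in> T \<and> y1 \<in> T \<and> y2 \<in> T \<and> y1 + y2 - x \<in> T \<and> x \<noteq> 0 \<and> y1 \<noteq> 0 \<and> y2 \<noteq> 0 \<and> y1 + y2 - x \<noteq> 0")
    case True
    then obtain D' T' where "stage n m S D' T'" "T1 \<subseteq> T'" "D1 dvd D'" "has_interpolant T' x y1 y2"
      using stage_interpolate[OF st1(1) cop m, of x y1 y2] st1(2) by blast
    then show ?thesis using st1 by (meson dvd_trans order_trans)
  qed (use st1 in blast)
qed

text \<open>Step \<open>i\<close> refines by the prime \<open>snd (prod_decode i)\<close> and interpolates the triple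
  \<open>from_nat (fst (prod_decode i))\<close>; as \<open>prod_decode\<close> is onto, each prime and each triple
  is treated at arbitrarily late steps.\<close>

definition stage_step :: "gen_int \<Rightarrow> nat \<Rightarrow> nat \<Rightarrow> rat set \<Rightarrow> nat \<Rightarrow> rat set \<Rightarrow> bool" where
  "stage_step m i D T D' T' \<longleftrightarrow> T \<subseteq> T' \<and> D dvd D'
    \<and> (prime (snd (prod_decode i)) \<longrightarrow> gi_dvd (gi_of_nat (D * snd (prod_decode i))) m
        \<longrightarrow> D * snd (prod_decode i) dvd D')
    \<and> (\<forall>x y1 y2. from_nat (fst (prod_decode i)) = (x, y1, y2) \<longrightarrow>
        x \<in> T \<longrightarrow> y1 \<in> T \<longrightarrow> y2 \<in> T \<longrightarrow> y1 + y2 - x \<in> T \<longrightarrow>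
        x \<noteq> 0 \<longrightarrow> y1 \<noteq> 0 \<longrightarrow> y2 \<noteq> 0 \<longrightarrow> y1 + y2 - x \<noteq> 0 \<longrightarrow> has_interpolant T' x y1 y2)"

lemma exists_stage_step:
  assumes "stage n m S D T" "gi_coprime n m" "\<not> gi_finite m" "\<exists>u\<in>S. u \<noteq> 0"
  shows "\<exists>D' T'. stage n m S D' T' \<and> stage_step m i D T D' T'"
proof -
  obtain x y1 y2 :: rat where xy: "from_nat (fst (prod_decode i)) = (x, y1, y2)" by (metis prod_cases3)
  show ?thesis
    using stage_extend[OF assms, of "snd (prod_decode i)" x y1 y2] unfolding stage_step_def xy by auto
qed

locale stage_sequence =
  fixes n m :: gen_int and S :: "rat set" and D :: "nat \<Rightarrow> nat" and T :: "nat \<Rightarrow> rat set"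
  assumes coprime: "gi_coprime n m"
    and stage: "stage n m S (D i) (T i)"
    and step: "stage_step m i (D i) (T i) (D (Suc i)) (T (Suc i))"
begin

lemma grow: "T i \<subseteq> T (Suc i)" "D i dvd D (Suc i)"
  using step unfolding stage_step_def by blast+

lemma refine:
  "prime (snd (prod_decode i)) \<Longrightarrow> gi_dvd (gi_of_nat (D i * snd (prod_decode i))) m
    \<Longrightarrow> D i * snd (prod_decode i) dvd D (Suc i)"
  using step unfolding stage_step_def by blast

lemma interpolate:
  "from_nat (fst (prod_decode i)) = (x, y1, y2) \<Longrightarrow>
    x \<in> T i \<Longrightarrow> y1 \<in> T i \<Longrightarrow> y2 \<in> T i \<Longrightarrow> y1 + y2 - x \<in> T i \<Longrightarrow>
    x \<noteq> 0 \<Longrightarrow> y1 \<noteq> 0 \<Longrightarrow> y2 \<noteq> 0 \<Longrightarrow> y1 + y2 - x \<noteq> 0 \<Longrightarrow> has_interpolant (T (Suc i)) x y1 y2"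
  using step unfolding stage_step_def by blast

lemma increasing: "i \<le> j \<Longrightarrow> T i \<subseteq> T j \<and> D i dvd D j"
proof (induction j rule: dec_induct)
  case (step j) then show ?case using grow[of j] by (auto intro: dvd_trans)
qed simp

lemma eventually_mem: "a \<in> (\<Union>i. T i) \<Longrightarrow> \<forall>\<^sub>F j in sequentially. a \<in> T j"
  using increasing unfolding eventually_sequentially by blast

lemma eventually_prime_power_dvd:
  assumes p: "prime p" shows "enat e \<le> m p \<Longrightarrow> \<forall>\<^sub>F i in sequentially. p ^ e dvd D i"
proof (induction e)
  case (Suc e)
  have "enat e \<le> m p" using Suc.prems order_trans[of "enat e" "enat (Suc e)"] by simp
  then obtain i where i: "\<And>j. j \<ge> i \<Longrightarrow> p ^ e dvd D j"
    using Suc.IH unfolding eventually_sequentially by blast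
  define j where "j = prod_encode (i, p)"
  have D: "D j > 0" "gi_dvd (gi_of_nat (D j)) m" using stage[of j] unfolding stage_def by blast+
  have "p ^ e dvd D j" using i le_prod_encode_1 unfolding j_def by blast
  have "p ^ Suc e dvd D (Suc j)"
  proof (cases "gi_dvd (gi_of_nat (D j * p)) m")
    case True
    then have "D j * p dvd D (Suc j)" using refine[of j] p unfolding j_def by simp
    moreover have "p ^ Suc e dvd D j * p" using \<open>p ^ e dvd D j\<close> by (simp add: mult_dvd_mono)
    ultimately show ?thesis by (rule dvd_trans[rotated])
  next
    case False
    then have "\<not> enat (multiplicity p (D j) + 1) \<le> m p"
      using gi_dvd_of_nat_mult_prime_power_iff[OF p D, of 1] by simp
    then have "enat (Suc e) < enat (multiplicity p (D j) + 1)"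
      using Suc.prems by (meson le_less_trans not_le)
    then have "p ^ Suc e dvd D j" by (intro multiplicity_dvd') simp
    then show ?thesis using grow(2)[of j] by (rule dvd_trans)
  qed
  then show ?case
    using increasing[of "Suc j"] unfolding eventually_sequentially by (blast intro: dvd_trans)
qed simp

lemma eventually_dvd:
  "b > 0 \<Longrightarrow> gi_dvd (gi_of_nat b) m \<Longrightarrow> \<forall>\<^sub>F i in sequentially. b dvd D i"
proof (induction b rule: less_induct)
  case (less b)
  show ?case
  proof (cases "b = 1")
    case False
    then have "b > 1" using less.prems(1) by simp
    then obtain p e c where p: "prime p" and e: "e = multiplicity p b" and c: "b = p ^ e * c" "\<not> p dvd c"
      and c_pos: "c > 0" and c_less: "c < b"
      by (rule nat_split_prime_power)
    have "\<forall>\<^sub>F i in sequentially. c dvd D i"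
      using less.IH[OF c_less c_pos] gi_dvd_of_nat_dvd[of c b m] c(1) less.prems by simp
    moreover have "\<forall>\<^sub>F i in sequentially. p ^ e dvd D i"
      using eventually_prime_power_dvd[OF p] less.prems p unfolding gi_dvd_of_nat_iff e by blast
    ultimately have ev: "\<forall>\<^sub>F i in sequentially. c dvd D i \<and> p ^ e dvd D i" by (rule eventually_conj)
    have "coprime (p ^ e) c" using c(2) p by (simp add: prime_imp_coprime)
    then have "p ^ e * c dvd D i" if "c dvd D i \<and> p ^ e dvd D i" for i
      using that by (intro divides_mult) auto
    then show ?thesis unfolding c(1) by (rule eventually_mono[OF ev])
  qed simp
qed

lemma stage_simple_cone: "simple_cone (over (Z_gi n) (D i)) (T i)"
  using stage unfolding stage_def by blast

lemma eventually_in_level: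
  assumes "h \<in> Z_gi (gi_mult n m)" shows "\<forall>\<^sub>F i in sequentially. h \<in> over (Z_gi n) (D i)"
proof -
  obtain b where b: "b > 0" "gi_dvd (gi_of_nat b) m" "h \<in> over (Z_gi n) b"
    using Z_gi_mult_in_over[OF coprime assms] by blast
  have level: "h \<in> over (Z_gi n) (D i)" if "b dvd D i" for i
    using over_mono_dvd[OF subgrp_Z_gi that] stage[of i] b(3) unfolding stage_def by blast
  show ?thesis by (rule eventually_mono[OF eventually_dvd[OF b(1,2)] level])
qed

lemma union_inter_Z_gi: "(\<Union>i. T i) \<inter> Z_gi n = S"
  using stage unfolding stage_def by blast

lemma simple_cone_union: "simple_cone (Z_gi (gi_mult n m)) (\<Union>i. T i)"
  unfolding simple_cone_def
proof (intro conjI ballI impI)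
  have "T i \<subseteq> Z_gi (gi_mult n m)" for i
    using stage[of i] over_Z_gi_subset[of "D i" m n] unfolding stage_def simple_cone_def by blast
  then show "(\<Union>i. T i) \<subseteq> Z_gi (gi_mult n m)" by blast
  show "0 \<in> (\<Union>i. T i)" using stage_simple_cone[of 0] unfolding simple_cone_def by blast
  show "0 \<le> t" if "t \<in> (\<Union>i. T i)" for t
    using that stage_simple_cone unfolding simple_cone_def by fast
  show "a + b \<in> (\<Union>i. T i)" if "a \<in> (\<Union>i. T i)" "b \<in> (\<Union>i. T i)" for a b
  proof -
    have "\<forall>\<^sub>F i in sequentially. a \<in> T i \<and> b \<in> T i"
      using eventually_conj[OF eventually_mem eventually_mem] that .
    then obtain i where "a \<in> T i" "b \<in> T i" using eventually_happens'[OF sequentially_bot] by blast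
    then show ?thesis using stage_simple_cone[of i] unfolding simple_cone_def by blast
  qed
  show "\<exists>N::nat. h + of_nat N * u \<in> (\<Union>i. T i) \<and> of_nat N * u - h \<in> (\<Union>i. T i)"
    if "u \<in> (\<Union>i. T i)" "u \<noteq> 0" "h \<in> Z_gi (gi_mult n m)" for u h
  proof -
    have "\<forall>\<^sub>F i in sequentially. u \<in> T i \<and> h \<in> over (Z_gi n) (D i)"
      using eventually_conj[OF eventually_mem eventually_in_level] that(1,3) .
    then obtain i where "u \<in> T i" "h \<in> over (Z_gi n) (D i)" using eventually_happens'[OF sequentially_bot] by blast
    then show ?thesis using stage_simple_cone[of i] \<open>u \<noteq> 0\<close> unfolding simple_cone_def by blast
  qed
qed

lemma union_has_interpolants:
  assumes "x \<in> (\<Union>i. T i)" "y1 \<in> (\<Union>i. T i)" "y2 \<in> (\<Union>i. T i)" "y1 + y2 - x \<in> (\<Union>i. T i)"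
    and "x \<noteq> 0" "y1 \<noteq> 0" "y2 \<noteq> 0" "y1 + y2 - x \<noteq> 0"
  shows "has_interpolant (\<Union>i. T i) x y1 y2"
proof -
  have "\<forall>\<^sub>F i in sequentially. x \<in> T i \<and> y1 \<in> T i \<and> y2 \<in> T i \<and> y1 + y2 - x \<in> T i"
    using assms(1-4) by (intro eventually_conj eventually_mem)
  then obtain i where i: "\<And>j. j \<ge> i \<Longrightarrow> x \<in> T j \<and> y1 \<in> T j \<and> y2 \<in> T j \<and> y1 + y2 - x \<in> T j"
    unfolding eventually_sequentially by blast
  define j where "j = prod_encode (to_nat (x, y1, y2), i)"
  have "has_interpolant (T (Suc j)) x y1 y2"
    using interpolate[of j x y1 y2] i[OF le_prod_encode_2[of i "to_nat (x, y1, y2)"]] assms(5-8)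
    unfolding j_def by simp
  then show ?thesis unfolding has_interpolant_def by blast
qed

end

lemma exists_riesz_extension:
  assumes cop: "gi_coprime n m" and m: "\<not> gi_finite m" and S: "simple_cone (Z_gi n) S"
  shows "\<exists>T. simple_cone (Z_gi (gi_mult n m)) T \<and> riesz (Z_gi (gi_mult n m)) T \<and> T \<inter> Z_gi n = S"
proof (cases "\<exists>u\<in>S. u \<noteq> 0")
  case False
  then have "S = {0}" using S unfolding simple_cone_def by blast
  moreover have "0 \<in> Z_gi a" for a using subgrp_Z_gi unfolding subgrp_def by blast
  ultimately have "simple_cone (Z_gi (gi_mult n m)) {0} \<and> {0} \<inter> Z_gi n = S"
    unfolding simple_cone_def by auto
  moreover have "riesz (Z_gi (gi_mult n m)) {0}" by (rule riesz_if_has_interpolants) auto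
  ultimately show ?thesis by blast
next
  case True
  have "stage n m S 1 S" using S gi_dvd_of_nat_1 unfolding stage_def over_1 simple_cone_def by blast
  then have "\<exists>f. \<forall>i. case_prod (stage n m S) (f i)
      \<and> (\<lambda>(D, T) (D', T'). stage_step m i D T D' T') (f i) (f (Suc i))"
    using exists_stage_step[OF _ cop m True] by (intro dependent_nat_choice) auto
  then obtain f where "\<And>i. stage n m S (fst (f i)) (snd (f i))"
    "\<And>i. stage_step m i (fst (f i)) (snd (f i)) (fst (f (Suc i))) (snd (f (Suc i)))"
    by (auto simp: case_prod_beta)
  then interpret stage_sequence n m S "\<lambda>i. fst (f i)" "\<lambda>i. snd (f i)"
    using cop by unfold_locales
  have "riesz (Z_gi (gi_mult n m)) (\<Union>i. snd (f i))"
  proof (rule riesz_if_has_interpolants)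
    show "0 \<in> (\<Union>i. snd (f i))" using simple_cone_union unfolding simple_cone_def by blast
  qed (rule union_has_interpolants)
  then show ?thesis using simple_cone_union union_inter_Z_gi by blast
qed

section \<open>Partially ordered groups and cones\<close>

lemma nmul_rat: "nmul N (u :: rat) = of_nat N * u"
  by (induction N) (auto simp: algebra_simps)

lemma nmul_mem: "0 \<in> P \<Longrightarrow> \<forall>x\<in>P. \<forall>y\<in>P. x + y \<in> P \<Longrightarrow> u \<in> P \<Longrightarrow> nmul N u \<in> P"
  by (induction N) auto

lemma additive_on_UNIV_0: "additive_on UNIV f \<Longrightarrow> f 0 = 0"
  unfolding additive_on_def by (metis UNIV_I add_0 add_cancel_right_right)

lemma additive_on_UNIV_minus: "additive_on UNIV f \<Longrightarrow> f (- x) = - f x"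
proof -
  assume f: "additive_on UNIV f"
  then have "f x + f (- x) = 0" using additive_on_UNIV_0[OF f] unfolding additive_on_def
    by (metis UNIV_I add.right_inverse)
  then show ?thesis by (simp add: eq_neg_iff_add_eq_0 add.commute)
qed

lemma additive_on_UNIV_nmul: "additive_on UNIV f \<Longrightarrow> f (nmul N x) = nmul N (f x)"
proof (induction N)
  case (Suc N)
  then have "f (x + nmul N x) = f x + f (nmul N x)" unfolding additive_on_def by blast
  then show ?case using Suc by simp
qed (simp add: additive_on_UNIV_0)

lemma ab_iso_id: "ab_iso A A id"
  unfolding ab_iso_def additive_on_def by (simp add: bij_betw_id)

lemma rank_one_Z_gi: "rank_one (Z_gi a)"
  unfolding rank_one_def
proof (intro exI conjI)
  show "subgrp (Z_gi a)" "ab_iso (Z_gi a) (Z_gi a) id" by (rule subgrp_Z_gi, rule ab_iso_id)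
  show "Z_gi a \<noteq> {0}" using one_in_Z_gi[of a] by (metis singletonD zero_neq_one)
qed

lemma additive_inj_image_cone_one_signed:
  fixes f :: "'a::ab_group_add \<Rightarrow> rat"
  assumes pog: "po_group UNIV Gp" and f: "additive_on UNIV f" "inj f"
    and u: "u \<in> Gp" "f u > 0" and v: "v \<in> Gp" "f v < 0"
  shows False
proof -
  have G0: "0 \<in> Gp" and Gadd: "\<forall>x\<in>Gp. \<forall>y\<in>Gp. x + y \<in> Gp" and Gpm: "Gp \<inter> uminus ` Gp = {0}"
    using pog unfolding po_group_def by blast+
  obtain a b where ab: "quotient_of (f u / - f v) = (a, b)" by fastforce
  have b: "b > 0" and q: "f u / - f v = of_int a / of_int b"
    using quotient_of_denom_pos[OF ab] quotient_of_div[OF ab] by blast+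
  have "0 < f u / - f v" using u(2) v(2) by (intro divide_pos_pos) simp_all
  then have a: "a > 0" using b unfolding q by (simp add: zero_less_divide_iff)
  have eq: "of_int b * f u + of_int a * f v = 0" using q v(2) b by (simp add: field_simps)
  have nat_int: "of_nat (nat a) = (of_int a :: rat)" "of_nat (nat b) = (of_int b :: rat)" using a b by simp_all
  have "f (nmul (nat b) u + nmul (nat a) v) = f (nmul (nat b) u) + f (nmul (nat a) v)"
    using f(1) unfolding additive_on_def by blast
  also have "\<dots> = 0"
    unfolding additive_on_UNIV_nmul[OF f(1)] nmul_rat nat_int by (rule eq)
  finally have "nmul (nat b) u + nmul (nat a) v = 0"
    using f(2) additive_on_UNIV_0[OF f(1)] by (metis injD)
  then have "nmul (nat b) u = - nmul (nat a) v" by (simp add: eq_neg_iff_add_eq_0)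
  then have "nmul (nat b) u \<in> Gp \<inter> uminus ` Gp"
    using nmul_mem[OF G0 Gadd u(1), of "nat b"] nmul_mem[OF G0 Gadd v(1), of "nat a"] by blast
  then have "nmul (nat b) u = 0" using Gpm by blast
  then have "of_int b * f u = 0"
    using additive_on_UNIV_nmul[OF f(1), of "nat b" u] additive_on_UNIV_0[OF f(1)] nat_int
    by (simp add: nmul_rat)
  then show False using b u(2) by simp
qed

lemma exists_iso_nonneg_on_cone:
  fixes f :: "'a::ab_group_add \<Rightarrow> rat" and Gp :: "'a set"
  assumes pog: "po_group UNIV Gp" and f: "ab_iso UNIV K f" and K: "subgrp K"
  shows "\<exists>\<tau>. ab_iso UNIV K \<tau> \<and> (\<forall>u\<in>Gp. 0 \<le> \<tau> u)"
proof (cases "\<exists>v\<in>Gp. f v < 0")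
  case True
  have add: "additive_on UNIV f" and inj: "inj f" and img: "f ` UNIV = K"
    using f unfolding ab_iso_def bij_betw_def by blast+
  have "additive_on UNIV (\<lambda>x. - f x)" using add unfolding additive_on_def by simp
  moreover have "inj (\<lambda>x. - f x)" using inj unfolding inj_def by simp
  moreover have "uminus ` K = K" using K subgrp_minus by (force simp: image_iff)
  then have "(\<lambda>x. - f x) ` UNIV = K" using img image_image[of uminus f UNIV] by simp
  ultimately have "ab_iso UNIV K (\<lambda>x. - f x)" unfolding ab_iso_def bij_betw_def by blast
  moreover have "0 \<le> - f u" if "u \<in> Gp" for u
    using True additive_inj_image_cone_one_signed[OF pog add inj that] by force
  ultimately show ?thesis by blast
next
  case False
  then show ?thesis using f by force
qed

lemma simple_cone_image:
  fixes \<tau> :: "'a::ab_group_add \<Rightarrow> rat" and Gp :: "'a set"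
  assumes pog: "po_group UNIV Gp" and simple: "simple_pog UNIV Gp"
    and \<tau>: "ab_iso UNIV K \<tau>" and nonneg: "\<forall>u\<in>Gp. 0 \<le> \<tau> u"
  shows "simple_cone K (\<tau> ` Gp)"
  unfolding simple_cone_def
proof (intro conjI ballI impI)
  have add: "\<And>x y. \<tau> (x + y) = \<tau> x + \<tau> y" and img: "\<tau> ` UNIV = K"
    using \<tau> unfolding ab_iso_def bij_betw_def additive_on_def by blast+
  have \<tau>0: "\<tau> 0 = 0" using \<tau> additive_on_UNIV_0 unfolding ab_iso_def by blast
  have G0: "0 \<in> Gp" and Gadd: "\<And>x y. x \<in> Gp \<Longrightarrow> y \<in> Gp \<Longrightarrow> x + y \<in> Gp"
    using pog unfolding po_group_def by blast+
  show "\<tau> ` Gp \<subseteq> K" using img by blast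
  show "0 \<in> \<tau> ` Gp" using G0 \<tau>0 by (metis image_eqI)
  show "a + b \<in> \<tau> ` Gp" if "a \<in> \<tau> ` Gp" "b \<in> \<tau> ` Gp" for a b
    using that Gadd add by (metis (no_types, lifting) imageE image_eqI)
  show "0 \<le> t" if "t \<in> \<tau> ` Gp" for t using that nonneg by blast
  show "\<exists>N::nat. h + of_nat N * u \<in> \<tau> ` Gp \<and> of_nat N * u - h \<in> \<tau> ` Gp"
    if uh: "u \<in> \<tau> ` Gp" "u \<noteq> 0" "h \<in> K" for u h
  proof -
    obtain u' x where u': "u' \<in> Gp" "u = \<tau> u'" and x: "h = \<tau> x" using uh img by blast
    have "u' \<noteq> 0" using uh(2) u'(2) \<tau>0 by auto
    then have "order_unit UNIV Gp u'" using simple u'(1) unfolding simple_pog_def by blast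
    then obtain N where N: "x + nmul N u' \<in> Gp" "nmul N u' - x \<in> Gp"
      unfolding order_unit_def po_le_def by auto
    have nmul: "\<tau> (nmul N u') = of_nat N * u"
      using additive_on_UNIV_nmul[of \<tau>] \<tau> u'(2) unfolding ab_iso_def by (simp add: nmul_rat)
    have "\<tau> (x + nmul N u') = h + of_nat N * u" using add nmul x by simp
    moreover have "\<tau> (nmul N u' - x) = of_nat N * u - h"
      using add[of "nmul N u'" "- x"] additive_on_UNIV_minus[of \<tau> x] \<tau> nmul x unfolding ab_iso_def by simp
    ultimately show ?thesis using N by (metis image_eqI)
  qed
qed

lemma simple_cone_imp_po_group:
  assumes "subgrp L" "simple_cone L T" shows "po_group L T"
proof -
  have "t = 0" if t: "t \<in> T" "t \<in> uminus ` T" for t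
  proof -
    obtain t' where "t' \<in> T" "t = - t'" using t(2) by blast
    moreover have "0 \<le> t" "0 \<le> t'" using t(1) \<open>t' \<in> T\<close> assms(2) unfolding simple_cone_def by blast+
    ultimately show ?thesis by simp
  qed
  moreover have T0: "0 \<in> T" using assms(2) unfolding simple_cone_def by blast
  moreover from T0 have "0 \<in> uminus ` T" by (metis image_eqI minus_zero)
  ultimately have "T \<inter> uminus ` T = {0}" by blast
  then show ?thesis using assms T0 unfolding po_group_def simple_cone_def by simp
qed

lemma simple_cone_imp_simple_pog: "L \<noteq> {0} \<Longrightarrow> simple_cone L T \<Longrightarrow> simple_pog L T"
  unfolding simple_pog_def order_unit_def po_le_def simple_cone_def by (simp add: nmul_rat)

lemma order_embedding_into_extension:
  assumes \<tau>: "ab_iso UNIV K \<tau>" and KH: "K \<subseteq> H" and T: "T \<inter> K = \<tau> ` Gp"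
  shows "order_embedding UNIV Gp H T \<tau>"
  using assms unfolding order_embedding_def pos_morph_def ab_iso_def bij_betw_def by blast

theorem theorem1p2:
  fixes Gp :: "'a::ab_group_add set" and n m :: gen_int
  assumes pog: "po_group UNIV Gp"
    and simple: "simple_pog UNIV Gp"
    and rank1: "rank_one (UNIV :: 'a set)"
    and assoc: "\<exists>f. ab_iso (UNIV :: 'a set) (Z_gi n) f"
    and m_inf: "\<not> gi_finite m"
    and cop: "gi_coprime n m"
  shows "\<exists>(H :: rat set) Hp (\<tau> :: 'a \<Rightarrow> rat).
           po_group H Hp \<and> simple_pog H Hp \<and> riesz H Hp \<and> rank_one H
         \<and> (\<exists>g. ab_iso H (Z_gi (gi_mult n m)) g)
         \<and> pos_morph UNIV Gp H Hp \<tau>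
         \<and> order_embedding UNIV Gp H Hp \<tau>"
proof -
  obtain \<tau> where \<tau>: "ab_iso UNIV (Z_gi n) \<tau>" "\<forall>u\<in>Gp. 0 \<le> \<tau> u"
    using assoc exists_iso_nonneg_on_cone[OF pog _ subgrp_Z_gi] by blast
  then have "simple_cone (Z_gi n) (\<tau> ` Gp)" by (rule simple_cone_image[OF pog simple])
  then obtain T where T: "simple_cone (Z_gi (gi_mult n m)) T" "riesz (Z_gi (gi_mult n m)) T"
    "T \<inter> Z_gi n = \<tau> ` Gp"
    using exists_riesz_extension[OF cop m_inf] by blast
  have emb: "order_embedding UNIV Gp (Z_gi (gi_mult n m)) T \<tau>"
    using order_embedding_into_extension[OF \<tau>(1) Z_gi_subset_Z_gi_mult T(3)] .
  have "Z_gi (gi_mult n m) \<noteq> {0}" using one_in_Z_gi[of "gi_mult n m"] by (metis singletonD zero_neq_one)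
  show ?thesis
  proof (intro exI conjI)
    show "po_group (Z_gi (gi_mult n m)) T" using simple_cone_imp_po_group[OF subgrp_Z_gi T(1)] .
    show "simple_pog (Z_gi (gi_mult n m)) T" using simple_cone_imp_simple_pog[OF _ T(1)] \<open>_ \<noteq> {0}\<close> .
    show "ab_iso (Z_gi (gi_mult n m)) (Z_gi (gi_mult n m)) id" by (rule ab_iso_id)
    show "pos_morph UNIV Gp (Z_gi (gi_mult n m)) T \<tau>" using emb unfolding order_embedding_def by blast
  qed (use T(2) rank_one_Z_gi emb in blast)+
qed

end
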